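(* Let $A,B$ be real symmetric $4\times 4$ matrices defining quadrics $\mathcal A: X^TAX=0$, $\mathcal B: X^TBX=0$ in $\mathbb{PR}^3$ with $f(\lambda)=\det(\lambda A-B)$ not identically zero. If $f(\lambda)=0$ has a quadruple root with Segre characteristic $[(211)]$, then the only possible index sequences (up to equivalence) are $\langle 2\,{\wr\wr}_{-}||\,2\rangle$ and $\langle 1\,{\wr\wr}_{-}||\,3\rangle$. Furthermore: (1) when the index sequence is $\langle 2\,{\wr\wr}_{-}||\,2\rangle$, the QSIC consists of a pair of intersecting real lines, counted twice; (2) when the index sequence is $\langle 1\,{\wr\wr}_{-}||\,3\rangle$, the QSIC consists of a pair of complex conjugate lines, counted twice.
   Context: $X=(x,y,z,w)^T$ homogeneous coordinates; QSIC $=\mathcal A\cap\mathcal B$. One may take $A$ nonsingular. Canonical form: for $A$ nonsingular there is a real invertible $Q$ with $Q^TAQ=\mathrm{diag}(\varepsilon_1E_1,\dots)$, $Q^TBQ=\mathrm{diag}(\varepsilon_1E_1J_1,\dots)$, $J_i$ the real Jordan blocks of $A^{-1}B$, $E_i$ anti-identity matrices of matching sizes, and $\varepsilon_i\in\{\pm1\}$ uniquely determined for blocks of real eigenvalues (the sign of $J_i$). Segre characteristic $[(211)]$: a single eigenvalue with one $2\times2$ and two $1\times1$ Jordan blocks. $\mathrm{Id}(\lambda)$ = number of positive eigenvalues of $\lambda A-B$. Index sequence $\langle s_0\sigma_1s_1\rangle$: $s_0,s_1$ the values of $\mathrm{Id}$ before and after the root; $\sigma_1$ = two copies of $\wr$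 with subscript the sign of the $2\times2$ block, followed by $||$ for the two $1\times1$ blocks. Equivalence: induced by change of basis of the pencil (including $(A,B)\mapsto(-A,-B)$: $s\mapsto 4-s$, signs reversed). "Counted twice" means a component of multiplicity two of the intersection. *)

theory Defs
  imports "Jordan_Normal_Form.Jordan_Normal_Form" "Jordan_Normal_Form.Char_Poly"
begin

definition sym4 :: "real mat \<Rightarrow> bool" where
  "sym4 A \<longleftrightarrow> A \<in> carrier_mat 4 4 \<and> transpose_mat A = A"

definition pencil_poly :: "real mat \<Rightarrow> real mat \<Rightarrow> real poly" where
  "pencil_poly A B = det (map_mat (\<lambda>a. [:0, a:]) A - map_mat (\<lambda>b. [:b:]) B)"

text \<open>Segre characteristic [(211)] at the root lam0: the Jordan blocks of A^-1 B belonging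
  to the eigenvalue lam0 have sizes 2,1,1 (and since the root is quadruple these are all blocks).\<close>
definition segre_211 :: "real mat \<Rightarrow> real mat \<Rightarrow> real \<Rightarrow> bool" where
  "segre_211 A B lam0 \<longleftrightarrow>
     invertible_mat A \<and>
     (\<exists>M n_as. M \<in> carrier_mat 4 4 \<and> A * M = B \<and> jordan_nf M n_as \<and>
        mset (map fst (filter (\<lambda>p. snd p = lam0) n_as)) = {#2, 1, 1#})"

definition num_pos_eig :: "real mat \<Rightarrow> nat" where
  "num_pos_eig M = (\<Sum>x\<in>{x. 0 < x \<and> poly (char_poly M) x = 0}. order x (char_poly M))"

definition Id :: "real mat \<Rightarrow> real mat \<Rightarrow> real \<Rightarrow> nat" where
  "Id A B lam = num_pos_eig (lam \<cdot>\<^sub>m A - B)"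

text \<open>Canonical form for Segre [(211)] with single eigenvalue lam0:
  Q^T A Q = diag(eps E_2, e2, e3), Q^T B Q = diag(eps E_2 J_2(lam0), e2 lam0, e3 lam0);
  eps is the sign of the 2x2 block.\<close>
definition canon_sign_211 :: "real mat \<Rightarrow> real mat \<Rightarrow> real \<Rightarrow> real \<Rightarrow> bool" where
  "canon_sign_211 A B lam0 eps \<longleftrightarrow> eps \<in> {-1, 1} \<and>
     (\<exists>Q e2 e3. Q \<in> carrier_mat 4 4 \<and> invertible_mat Q \<and> e2 \<in> {-1, 1} \<and> e3 \<in> {-1, 1} \<and>
        transpose_mat Q * A * Q =
          mat_of_rows_list 4 [[0, eps, 0, 0], [eps, 0, 0, 0], [0, 0, e2, 0], [0, 0, 0, e3]] \<and>
        transpose_mat Q * B * Q =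
          mat_of_rows_list 4 [[0, eps * lam0, 0, 0], [eps * lam0, eps, 0, 0],
                              [0, 0, e2 * lam0, 0], [0, 0, 0, e3 * lam0]])"

text \<open>The pencil (A,B) has the index sequence < s0 wr wr_eps || s1 >.\<close>
definition index_seq_211 :: "real mat \<Rightarrow> real mat \<Rightarrow> nat \<Rightarrow> real \<Rightarrow> nat \<Rightarrow> bool" where
  "index_seq_211 A B s0 eps s1 \<longleftrightarrow> sym4 A \<and> sym4 B \<and> pencil_poly A B \<noteq> 0 \<and>
     (\<exists>lam0. order lam0 (pencil_poly A B) = 4 \<and> segre_211 A B lam0 \<and>
        canon_sign_211 A B lam0 eps \<and>
        (\<forall>lam < lam0. Id A B lam = s0) \<and> (\<forall>lam > lam0. Id A B lam = s1))"

text \<open>Equivalence of pencils: change of basis of the pencil and projective change of coordinates.\<close>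
definition pencil_equiv :: "real mat \<Rightarrow> real mat \<Rightarrow> real mat \<Rightarrow> real mat \<Rightarrow> bool" where
  "pencil_equiv A B A' B' \<longleftrightarrow>
     (\<exists>P a b c d. P \<in> carrier_mat 4 4 \<and> invertible_mat P \<and> a * d - b * c \<noteq> 0 \<and>
        A' = transpose_mat P * (a \<cdot>\<^sub>m A + b \<cdot>\<^sub>m B) * P \<and>
        B' = transpose_mat P * (c \<cdot>\<^sub>m A + d \<cdot>\<^sub>m B) * P)"

definition index_seq_equiv_211 :: "real mat \<Rightarrow> real mat \<Rightarrow> nat \<Rightarrow> real \<Rightarrow> nat \<Rightarrow> bool" where
  "index_seq_equiv_211 A B s0 eps s1 \<longleftrightarrow>
     (\<exists>A' B'. pencil_equiv A B A' B' \<and> index_seq_211 A' B' s0 eps s1)"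

definition cmat :: "real mat \<Rightarrow> complex mat" where
  "cmat A = map_mat complex_of_real A"

definition quad_form :: "real mat \<Rightarrow> complex vec \<Rightarrow> complex" where
  "quad_form A X = X \<bullet> (cmat A *\<^sub>v X)"

text \<open>Points of the QSIC (homogeneous coordinates, nonzero vectors of C^4).\<close>
definition qsic :: "real mat \<Rightarrow> real mat \<Rightarrow> complex vec set" where
  "qsic A B = {X. X \<in> carrier_vec 4 \<and> X \<noteq> 0\<^sub>v 4 \<and> quad_form A X = 0 \<and> quad_form B X = 0}"

text \<open>A projective line, represented by its 2-dimensional linear subspace of C^4.\<close>
definition is_line :: "complex vec set \<Rightarrow> bool" where
  "is_line L \<longleftrightarrow> (\<exists>p q. p \<in> carrier_vec 4 \<and> q \<in> carrier_vec 4 \<and>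
      (\<forall>a b. a \<cdot>\<^sub>v p + b \<cdot>\<^sub>v q = 0\<^sub>v 4 \<longrightarrow> a = 0 \<and> b = 0) \<and>
      L = {a \<cdot>\<^sub>v p + b \<cdot>\<^sub>v q | a b. True})"

definition conj_set :: "complex vec set \<Rightarrow> complex vec set" where
  "conj_set L = map_vec cnj ` L"

definition real_line :: "complex vec set \<Rightarrow> bool" where
  "real_line L \<longleftrightarrow> is_line L \<and> conj_set L = L"

text \<open>The two quadrics are tangent along L (gradients A X and B X linearly dependent at every
  point of L); for a line contained in both quadrics this means that L is a component of
  multiplicity at least two of the intersection.\<close>
definition tangent_along :: "real mat \<Rightarrow> real mat \<Rightarrow> complex vec set \<Rightarrow> bool" where
  "tangent_along A B L \<longleftrightarrow> (\<forall>X\<in>L. \<exists>a b. (a, b) \<noteq> (0, 0) \<and>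
      a \<cdot>\<^sub>v (cmat A *\<^sub>v X) + b \<cdot>\<^sub>v (cmat B *\<^sub>v X) = 0\<^sub>v 4)"

definition qsic_two_double_lines ::
    "real mat \<Rightarrow> real mat \<Rightarrow> complex vec set \<Rightarrow> complex vec set \<Rightarrow> bool" where
  "qsic_two_double_lines A B L1 L2 \<longleftrightarrow> is_line L1 \<and> is_line L2 \<and> L1 \<noteq> L2 \<and>
     qsic A B = (L1 \<union> L2) - {0\<^sub>v 4} \<and> tangent_along A B L1 \<and> tangent_along A B L2"

definition qsic_real_intersecting_lines_double :: "real mat \<Rightarrow> real mat \<Rightarrow> bool" where
  "qsic_real_intersecting_lines_double A B \<longleftrightarrow>
     (\<exists>L1 L2. qsic_two_double_lines A B L1 L2 \<and> real_line L1 \<and> real_line L2 \<and>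
        (\<exists>X. X \<in> L1 \<inter> L2 \<and> X \<noteq> 0\<^sub>v 4))"

definition qsic_conj_lines_double :: "real mat \<Rightarrow> real mat \<Rightarrow> bool" where
  "qsic_conj_lines_double A B \<longleftrightarrow>
     (\<exists>L1. qsic_two_double_lines A B L1 (conj_set L1))"

end

theory Submission
  imports Defs
begin

text \<open>
  If \<open>A\<^sup>-\<^sup>1 B\<close> has the single eigenvalue \<open>l\<close> with Jordan blocks of sizes 2, 1, 1, then
  \<open>A\<^sup>-\<^sup>1 B = l I + p q\<^sup>T\<close> with \<open>q\<^sup>T p = 0\<close>, and symmetry of \<open>B\<close> turns this into
  \<open>B = l A + t (A p) (A p)\<^sup>T\<close> with \<open>p\<^sup>T A p = 0\<close>. Completing the isotropic vector \<open>p\<close> to a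
  hyperbolic pair and two orthogonal unit vectors brings the pencil to the canonical pair
  \<open>diag ([[0, -1], [-1, 0]], 1, e)\<close>, \<open>diag ([[0, 0], [0, -1]], 0, 0)\<close> with \<open>e = \<plusminus>1\<close>, whose index
  sequences are \<open>\<langle>2 \<wr>\<wr>\<^sub>- || 2\<rangle>\<close> and \<open>\<langle>1 \<wr>\<wr>\<^sub>- || 3\<rangle>\<close>.

  Conversely, if a pencil is congruent to a canonical pair with signs \<open>e2, e3\<close>, then
  \<open>det (x A - B)\<close> has the sign of \<open>- e2 e3\<close>, and this sign fixes the parity of the number of
  positive eigenvalues of \<open>x A - B\<close>; hence \<open>s0\<close> determines \<open>e2 e3\<close>. In canonical coordinates the
  intersection is \<open>y1 = 0, e2 y2\<^sup>2 + e3 y3\<^sup>2 = 0\<close>, a pair of lines that are real for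
  \<open>e2 e3 = -1\<close> and complex conjugate for \<open>e2 e3 = 1\<close>; both lie in the kernel of the rank-one
  member of the pencil, which makes them double.
\<close>

lemma less_4_cases: "(i::nat) < 4 \<longleftrightarrow> i = 0 \<or> i = 1 \<or> i = 2 \<or> i = 3"
  by auto

lemma sum_lessThan_4: "(\<Sum>k<(4::nat). f k) = f 0 + f 1 + f 2 + (f 3 :: 'a :: comm_monoid_add)"
  by (simp add: numeral_eq_Suc lessThan_Suc ac_simps)

lemma scalar_prod_4:
  assumes "v \<in> carrier_vec 4" "w \<in> carrier_vec 4"
  shows "v \<bullet> w = v$0 * w$0 + v$1 * w$1 + v$2 * w$2 + v$3 * (w$3 :: 'a :: comm_semiring_0)"
  using assms unfolding scalar_prod_def by (simp add: atLeast0LessThan sum_lessThan_4)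

lemma index_mult_mat_4:
  assumes "A \<in> carrier_mat 4 4" "B \<in> carrier_mat 4 4" "i < 4" "j < 4"
  shows "(A * B) $$ (i,j) =
    A$$(i,0) * B$$(0,j) + A$$(i,1) * B$$(1,j) + A$$(i,2) * B$$(2,j) + A$$(i,3) * (B$$(3,j) :: 'a :: comm_semiring_0)"
  using assms by (simp add: scalar_prod_4)

lemma index_mult_mat_vec_4:
  assumes "A \<in> carrier_mat 4 4" "v \<in> carrier_vec 4" "i < 4"
  shows "(A *\<^sub>v v) $ i = A$$(i,0) * v$0 + A$$(i,1) * v$1 + A$$(i,2) * v$2 + A$$(i,3) * (v$3 :: 'a :: comm_semiring_0)"
  using assms by (simp add: scalar_prod_4)

lemma mat_delete_carrier_eq:
  "A \<in> carrier_mat (Suc n) (Suc n) \<Longrightarrow> i < Suc n \<Longrightarrow> j < Suc n \<Longrightarrow>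
    mat_delete A i j = mat n n (\<lambda>(a,b). A $$ (insert_index i a, insert_index j b))"
  unfolding mat_delete_def by (rule eq_matI) auto

lemma mat_delete_mat:
  "mat_delete (mat (Suc n) (Suc n) f) i j = mat n n (\<lambda>(a,b). f (insert_index i a, insert_index j b))"
  unfolding mat_delete_def by (rule eq_matI) auto

lemma det_mat_1: "det (mat (Suc 0) (Suc 0) f) = (f (0,0) :: 'a :: comm_ring_1)"
  by (subst laplace_expansion_row[of _ 1 0]) (auto simp: cofactor_def mat_delete_def)

lemma det_mat_2: "det (mat 2 2 f) = (f (0,0) * f (1,1) - f (0,1) * f (1,0) :: 'a :: comm_ring_1)"
  by (subst laplace_expansion_row[of _ 2 0])
    (auto simp: cofactor_def mat_delete_def numeral_2_eq_2 lessThan_Suc insert_index_def det_mat_1)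

lemma det_mat_3: "det (mat 3 3 f) =
    (f (0,0) * (f (1,1) * f (2,2) - f (1,2) * f (2,1))
   - f (0,1) * (f (1,0) * f (2,2) - f (1,2) * f (2,0))
   + f (0,2) * (f (1,0) * f (2,1) - f (1,1) * f (2,0)) :: 'a :: comm_ring_1)"
  by (subst laplace_expansion_row[of _ 3 0], simp, simp)
    (simp add: cofactor_def numeral_3_eq_3 mat_delete_mat lessThan_Suc insert_index_def
      det_mat_2[unfolded numeral_2_eq_2] numeral_2_eq_2 algebra_simps)

lemma det_4:
  assumes "A \<in> carrier_mat 4 4"
  shows "det A =
      A$$(0,0) * (A$$(1,1) * (A$$(2,2) * A$$(3,3) - A$$(2,3) * A$$(3,2))
        - A$$(1,2) * (A$$(2,1) * A$$(3,3) - A$$(2,3) * A$$(3,1))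
        + A$$(1,3) * (A$$(2,1) * A$$(3,2) - A$$(2,2) * A$$(3,1)))
    - A$$(0,1) * (A$$(1,0) * (A$$(2,2) * A$$(3,3) - A$$(2,3) * A$$(3,2))
        - A$$(1,2) * (A$$(2,0) * A$$(3,3) - A$$(2,3) * A$$(3,0))
        + A$$(1,3) * (A$$(2,0) * A$$(3,2) - A$$(2,2) * A$$(3,0)))
    + A$$(0,2) * (A$$(1,0) * (A$$(2,1) * A$$(3,3) - A$$(2,3) * A$$(3,1))
        - A$$(1,1) * (A$$(2,0) * A$$(3,3) - A$$(2,3) * A$$(3,0))
        + A$$(1,3) * (A$$(2,0) * A$$(3,1) - A$$(2,1) * A$$(3,0)))
    - A$$(0,3) * (A$$(1,0) * (A$$(2,1) * A$$(3,2) - A$$(2,2) * A$$(3,1))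
        - A$$(1,1) * (A$$(2,0) * A$$(3,2) - A$$(2,2) * A$$(3,0))
        + A$$(1,2) * (A$$(2,0) * A$$(3,1) - A$$(2,1) * (A$$(3,0) :: 'a :: comm_ring_1)))"
proof -
  have four: "(4::nat) = Suc (Suc (Suc (Suc 0)))"
    by simp
  have A: "A \<in> carrier_mat (Suc 3) (Suc 3)"
    using assms by simp
  show ?thesis
    by (subst laplace_expansion_row[OF assms, of 0], simp)
      (simp add: cofactor_def four mat_delete_carrier_eq[OF A] lessThan_Suc insert_index_def
        det_mat_3[unfolded numeral_3_eq_3 numeral_2_eq_2] numeral_3_eq_3 numeral_2_eq_2 algebra_simps)
qed

lemma invertible_mat_inverse:
  fixes A :: "'a :: semiring_1 mat"
  assumes A: "A \<in> carrier_mat n n" and "invertible_mat A"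
  obtains B where "B \<in> carrier_mat n n" "A * B = 1\<^sub>m n" "B * A = 1\<^sub>m n"
proof -
  from assms(2) obtain B where AB: "A * B = 1\<^sub>m (dim_row A)" and BA: "B * A = 1\<^sub>m (dim_row B)"
    unfolding invertible_mat_def inverts_mat_def by auto
  have "dim_col B = n" "dim_row B = n"
    using arg_cong[OF AB, of dim_col] arg_cong[OF BA, of dim_col] A by auto
  with AB BA A show ?thesis
    by (intro that[of B]) auto
qed

lemma invertible_mat_iff_det_nonzero:
  fixes A :: "'a :: field mat"
  assumes A: "A \<in> carrier_mat n n"
  shows "invertible_mat A \<longleftrightarrow> det A \<noteq> 0"
proof
  assume "invertible_mat A"
  then obtain B where "B \<in> carrier_mat n n" "A * B = 1\<^sub>m n"
    using invertible_mat_inverse[OF A] by metis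
  then show "det A \<noteq> 0"
    using det_mult[OF A] by (metis det_one mult_zero_left zero_neq_one)
next
  assume "det A \<noteq> 0"
  then show "invertible_mat A"
    using det_non_zero_imp_unit[OF A, of "()"] A
    unfolding Units_def ring_mat_def invertible_mat_def inverts_mat_def by auto
qed

lemma mult_mat_vec_zero_right: "A \<in> carrier_mat m n \<Longrightarrow> A *\<^sub>v 0\<^sub>v n = 0\<^sub>v m"
  by (intro eq_vecI) auto

lemma invertible_mat_mult_vec_nonzero:
  fixes A :: "'a :: field mat"
  assumes A: "A \<in> carrier_mat n n" and "invertible_mat A" and p: "p \<in> carrier_vec n" "p \<noteq> 0\<^sub>v n"
  shows "A *\<^sub>v p \<noteq> 0\<^sub>v n"
proof
  assume Ap: "A *\<^sub>v p = 0\<^sub>v n"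
  obtain B where B: "B \<in> carrier_mat n n" "B * A = 1\<^sub>m n"
    using invertible_mat_inverse[OF assms(1,2)] by metis
  have "p = (B * A) *\<^sub>v p"
    using B p by simp
  also have "\<dots> = B *\<^sub>v (A *\<^sub>v p)"
    by (rule assoc_mult_mat_vec[OF B(1) A p(1)])
  also have "\<dots> = 0\<^sub>v n"
    unfolding Ap using B(1) by (rule mult_mat_vec_zero_right)
  finally show False
    using p by simp
qed

lemma det_congruence:
  fixes Q S :: "'a :: comm_ring_1 mat"
  assumes Q: "Q \<in> carrier_mat n n" and S: "S \<in> carrier_mat n n"
  shows "det (transpose_mat Q * S * Q) = (det Q)\<^sup>2 * det S"
proof -
  have QT: "transpose_mat Q \<in> carrier_mat n n"
    using Q by simp
  show ?thesis
    unfolding det_mult[OF mult_carrier_mat[OF QT S] Q] det_mult[OF QT S] det_transpose[OF Q]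
    by (simp add: power2_eq_square)
qed

lemma congruence_mult:
  fixes M P Q :: "'a :: comm_semiring_1 mat"
  assumes "M \<in> carrier_mat n n" "P \<in> carrier_mat n n" "Q \<in> carrier_mat n n"
  shows "transpose_mat (P * Q) * M * (P * Q) = transpose_mat Q * (transpose_mat P * M * P) * Q"
  using assms by (simp add: transpose_mult[of _ n n _ n] assoc_mult_mat[of _ n n _ n _ n])

lemma congruence_inverse:
  fixes R Ri M :: "'a :: comm_ring_1 mat"
  assumes R: "R \<in> carrier_mat n n" and Ri: "Ri \<in> carrier_mat n n" and R_Ri: "R * Ri = 1\<^sub>m n"
    and M: "M \<in> carrier_mat n n" and RM: "transpose_mat R * M * R = K"
  shows "M = transpose_mat Ri * K * Ri"
proof -
  have RiT: "transpose_mat Ri \<in> carrier_mat n n" and RT: "transpose_mat R \<in> carrier_mat n n"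
    using R Ri by simp_all
  have "transpose_mat Ri * transpose_mat R = 1\<^sub>m n"
    using transpose_mult[OF R Ri] R_Ri by simp
  then have inv: "transpose_mat Ri * (transpose_mat R * M) = M"
    using assoc_mult_mat[OF RiT RT M] M by simp
  have "transpose_mat Ri * K * Ri = transpose_mat Ri * (transpose_mat R * M * R) * Ri"
    by (simp only: RM)
  also have "\<dots> = transpose_mat Ri * (transpose_mat R * M) * R * Ri"
    by (simp only: assoc_mult_mat[OF RiT mult_carrier_mat[OF RT M] R])
  also have "\<dots> = M"
    unfolding inv using M R Ri R_Ri by simp
  finally show ?thesis ..
qed

section \<open>Counting positive roots\<close>

definition pos_roots_count :: "real poly \<Rightarrow> nat" where
  "pos_roots_count p = (\<Sum>x\<in>{x. 0 < x \<and> poly p x = 0}. order x p)"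

lemma num_pos_eig_eq_pos_roots_count: "num_pos_eig M = pos_roots_count (char_poly M)"
  unfolding num_pos_eig_def pos_roots_count_def ..

lemma pos_roots_count_mult:
  assumes p: "p \<noteq> 0" and q: "q \<noteq> 0"
  shows "pos_roots_count (p * q) = pos_roots_count p + pos_roots_count q"
proof -
  let ?S = "\<lambda>p. {x::real. 0 < x \<and> poly p x = 0}"
  have fin: "finite (?S p)" "finite (?S q)"
    using poly_roots_finite[OF p] poly_roots_finite[OF q] by (auto elim: finite_subset[rotated])
  have "pos_roots_count (p * q) = (\<Sum>x\<in>?S p \<union> ?S q. order x p + order x q)"
    unfolding pos_roots_count_def using order_mult[of p q] p q by (intro sum.cong) auto
  also have "\<dots> = (\<Sum>x\<in>?S p \<union> ?S q. order x p) + (\<Sum>x\<in>?S p \<union> ?S q. order x q)"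
    by (rule sum.distrib)
  also have "(\<Sum>x\<in>?S p \<union> ?S q. order x p) = pos_roots_count p"
    unfolding pos_roots_count_def using fin by (intro sum.mono_neutral_right) (auto simp: order_root)
  also have "(\<Sum>x\<in>?S p \<union> ?S q. order x q) = pos_roots_count q"
    unfolding pos_roots_count_def using fin by (intro sum.mono_neutral_right) (auto simp: order_root)
  finally show ?thesis .
qed

lemma pos_roots_count_linear: "pos_roots_count [:-r, 1:] = (if r > 0 then 1 else 0)"
proof -
  have "{x. 0 < x \<and> poly [:-r, 1:] x = 0} = (if r > 0 then {r} else {})"
    by auto
  moreover have "order r [:-r, 1:] = 1"
    using order_power_n_n[of r 1] by simp
  ultimately show ?thesis
    unfolding pos_roots_count_def by auto
qed

lemma pos_roots_count_mult_linear:
  assumes "p \<noteq> 0"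
  shows "pos_roots_count (p * [:-r, 1:]) = pos_roots_count p + of_bool (r > 0)"
  by (subst pos_roots_count_mult) (use assms in \<open>auto simp: pos_roots_count_linear\<close>)

lemma pos_roots_count_monic_quadratic:
  assumes "c < 0"
  shows "pos_roots_count [:c, b, 1:] = 1"
proof -
  define s where "s = sqrt (b\<^sup>2 - 4 * c)"
  have s2: "s\<^sup>2 = b\<^sup>2 - 4 * c"
    unfolding s_def using assms zero_le_power2[of b] by (intro real_sqrt_pow2) linarith
  have "\<bar>b\<bar> < s"
    unfolding s_def using assms by (intro real_less_rsqrt) (simp add: power2_abs)
  then have "(- b + s) / 2 > 0" "\<not> (- b - s) / 2 > 0"
    by auto
  moreover have "[:c, b, 1:] = [:- ((- b + s) / 2), 1:] * [:- ((- b - s) / 2), 1:]"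
    using s2 by (simp add: field_simps power2_eq_square)
  ultimately show ?thesis
    by (simp only:) (subst pos_roots_count_mult, auto simp: pos_roots_count_linear)
qed

lemma poly_pos_root_if_neg_at_0:
  fixes p :: "real poly"
  assumes "lead_coeff p > 0" and "poly p 0 < 0"
  shows "\<exists>x>0. poly p x = 0"
proof -
  obtain n where n: "\<forall>x\<ge>n. poly p x \<ge> lead_coeff p"
    using poly_pinfty_gt_lc[OF assms(1)] by auto
  then have "poly p (max n 1) > 0"
    using assms(1) by (meson max.cobounded1 order_less_le_trans)
  then show ?thesis
    using poly_IVT_pos[of 0 "max n 1" p] assms(2) by force
qed

text \<open>Dividing off a positive root flips the sign of the constant term.\<close>
lemma even_pos_roots_count_iff:
  fixes p :: "real poly"
  assumes "poly p 0 \<noteq> 0" and "lead_coeff p > 0"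
  shows "even (pos_roots_count p) \<longleftrightarrow> poly p 0 > 0"
  using assms
proof (induction "degree p" arbitrary: p rule: less_induct)
  case less
  show ?case
  proof (cases "\<exists>r>0. poly p r = 0")
    case True
    then obtain r q where r: "r > 0" and pq: "p = [:-r, 1:] * q"
      by (metis dvdE poly_eq_0_iff_dvd)
    have q: "q \<noteq> 0"
      using less.prems pq by auto
    have "degree q < degree p"
      unfolding pq using q by (subst degree_mult_eq) auto
    moreover have "lead_coeff q = lead_coeff p" "poly p 0 = - r * poly q 0"
      unfolding pq lead_coeff_mult by simp_all
    ultimately have "even (pos_roots_count q) \<longleftrightarrow> poly q 0 > 0" "poly q 0 \<noteq> 0"
      using less.hyps[of q] less.prems by auto
    moreover have "pos_roots_count p = pos_roots_count [:-r, 1:] + pos_roots_count q"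
      unfolding pq using q by (intro pos_roots_count_mult) auto
    ultimately show ?thesis
      using \<open>poly p 0 = - r * poly q 0\<close> r
      by (auto simp: pos_roots_count_linear zero_less_mult_iff mult_less_0_iff)
  next
    case False
    then have "pos_roots_count p = 0"
      unfolding pos_roots_count_def by (auto intro: sum.neutral)
    moreover have "poly p 0 > 0"
      using False poly_pos_root_if_neg_at_0[of p] less.prems by force
    ultimately show ?thesis
      by simp
  qed
qed

lemma poly_char_poly_0:
  fixes S :: "'a :: field mat"
  assumes S: "S \<in> carrier_mat n n" and "even n"
  shows "poly (char_poly S) 0 = det S"
proof -
  have "char_matrix S 0 = S"
    unfolding char_matrix_def using S by (intro eq_matI) auto
  moreover have "- S = (-1) \<cdot>\<^sub>m S"
    using S by (intro eq_matI) auto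
  ultimately show ?thesis
    unfolding char_poly_matrix[OF S] using S \<open>even n\<close> by simp
qed

lemma even_num_pos_eig_iff_det_pos:
  fixes S :: "real mat"
  assumes S: "S \<in> carrier_mat n n" and "even n" and "det S \<noteq> 0"
  shows "even (num_pos_eig S) \<longleftrightarrow> det S > 0"
proof -
  have "lead_coeff (char_poly S) = 1"
    using degree_monic_char_poly[OF S] by simp
  then show ?thesis
    unfolding num_pos_eig_eq_pos_roots_count poly_char_poly_0[OF assms(1,2), symmetric]
    using assms by (intro even_pos_roots_count_iff) (auto simp: poly_char_poly_0)
qed

section \<open>Symmetric bilinear forms\<close>

definition bilin :: "'a :: comm_semiring_0 mat \<Rightarrow> 'a vec \<Rightarrow> 'a vec \<Rightarrow> 'a" where
  "bilin A x y = x \<bullet> (A *\<^sub>v y)"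

context
  fixes A :: "'a :: field mat" and n :: nat
  assumes A: "A \<in> carrier_mat n n"
begin

lemma bilin_add_left:
  "x \<in> carrier_vec n \<Longrightarrow> y \<in> carrier_vec n \<Longrightarrow> z \<in> carrier_vec n \<Longrightarrow>
    bilin A (x + y) z = bilin A x z + bilin A y z"
  unfolding bilin_def using A by (simp add: add_scalar_prod_distrib[of _ n])

lemma bilin_add_right:
  "x \<in> carrier_vec n \<Longrightarrow> y \<in> carrier_vec n \<Longrightarrow> z \<in> carrier_vec n \<Longrightarrow>
    bilin A x (y + z) = bilin A x y + bilin A x z"
  unfolding bilin_def using A by (simp add: mult_add_distrib_mat_vec[OF A] scalar_prod_add_distrib[of _ n])

lemma bilin_diff_left:
  "x \<in> carrier_vec n \<Longrightarrow> y \<in> carrier_vec n \<Longrightarrow> z \<in> carrier_vec n \<Longrightarrow>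
    bilin A (x - y) z = bilin A x z - bilin A y z"
  unfolding bilin_def using A by (simp add: minus_scalar_prod_distrib[of _ n])

lemma bilin_diff_right:
  "x \<in> carrier_vec n \<Longrightarrow> y \<in> carrier_vec n \<Longrightarrow> z \<in> carrier_vec n \<Longrightarrow>
    bilin A x (y - z) = bilin A x y - bilin A x z"
  unfolding bilin_def using A by (simp add: mult_minus_distrib_mat_vec[OF A] scalar_prod_minus_distrib[of _ n])

lemma bilin_smult_left:
  "x \<in> carrier_vec n \<Longrightarrow> z \<in> carrier_vec n \<Longrightarrow> bilin A (c \<cdot>\<^sub>v x) z = c * bilin A x z"
  unfolding bilin_def using A by simp

lemma bilin_smult_right:
  "x \<in> carrier_vec n \<Longrightarrow> z \<in> carrier_vec n \<Longrightarrow> bilin A x (c \<cdot>\<^sub>v z) = c * bilin A x z"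
  unfolding bilin_def using A by (simp add: mult_mat_vec[OF A])

lemma bilin_zero_left: "z \<in> carrier_vec n \<Longrightarrow> bilin A (0\<^sub>v n) z = 0"
  unfolding bilin_def using A by simp

lemma bilin_zero_right: "z \<in> carrier_vec n \<Longrightarrow> bilin A z (0\<^sub>v n) = 0"
  unfolding bilin_def using A by (simp add: mult_mat_vec_zero_right)

lemmas bilin_linear = bilin_add_left bilin_add_right bilin_diff_left bilin_diff_right
  bilin_smult_left bilin_smult_right bilin_zero_left bilin_zero_right

lemma bilin_sym:
  assumes "transpose_mat A = A" "x \<in> carrier_vec n" "y \<in> carrier_vec n"
  shows "bilin A x y = bilin A y x"
  unfolding bilin_def
  using transpose_vec_mult_scalar[OF A assms(2,3)] comm_scalar_prod[of x n "A *\<^sub>v y"] A assms by auto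

lemma index_congruence_mat:
  assumes Q: "Q \<in> carrier_mat n n" and "i < n" "j < n"
  shows "(transpose_mat Q * A * Q) $$ (i,j) = bilin A (col Q i) (col Q j)"
  unfolding bilin_def using Q A assms(2,3) by (simp add: assoc_mult_mat[of _ n n _ n _ n] mult_mat_vec_def)

end

lemma index_congruence_mat_of_cols:
  fixes M :: "'a :: field mat"
  assumes M: "M \<in> carrier_mat n n" and vs: "set vs \<subseteq> carrier_vec n" "length vs = n"
    and ij: "i < n" "j < n"
  shows "(transpose_mat (mat_of_cols n vs) * M * mat_of_cols n vs) $$ (i,j) = bilin M (vs ! i) (vs ! j)"
proof -
  have "mat_of_cols n vs \<in> carrier_mat n n"
    using mat_of_cols_carrier(1)[of n vs] vs(2) by simp
  moreover have "vs ! k \<in> carrier_vec n" if "k < n" for k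
    using vs that by auto
  ultimately show ?thesis
    using index_congruence_mat[OF M _ ij, of "mat_of_cols n vs"] ij vs(2) by simp
qed

lemma scalar_prod_self_eq_0:
  fixes v :: "real vec"
  assumes "v \<in> carrier_vec n" and "v \<bullet> v = 0"
  shows "v = 0\<^sub>v n"
proof -
  have "(\<Sum>i\<in>{0..<n}. (v $ i)\<^sup>2) = 0"
    using assms unfolding scalar_prod_def by (simp add: power2_eq_square)
  then have "\<forall>i\<in>{0..<n}. v $ i = 0"
    by (subst (asm) sum_nonneg_eq_0_iff) auto
  then show ?thesis
    using assms(1) by (intro eq_vecI) auto
qed

lemma bilin_nondegenerate:
  fixes A :: "real mat"
  assumes A: "A \<in> carrier_mat n n" and inv: "invertible_mat A" and z: "z \<in> carrier_vec n"
    and orth: "\<And>y. y \<in> carrier_vec n \<Longrightarrow> bilin A z y = 0"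
  shows "z = 0\<^sub>v n"
proof -
  obtain B where B: "B \<in> carrier_mat n n" "A * B = 1\<^sub>m n"
    using invertible_mat_inverse[OF A inv] by metis
  have "A *\<^sub>v (B *\<^sub>v z) = z"
    using assoc_mult_mat_vec[OF A B(1) z, symmetric] B(2) z by simp
  then have "z \<bullet> z = 0"
    using orth[of "B *\<^sub>v z"] B z unfolding bilin_def by simp
  then show ?thesis
    by (rule scalar_prod_self_eq_0[OF z])
qed

lemma bilin_sym4: "sym4 A \<Longrightarrow> x \<in> carrier_vec 4 \<Longrightarrow> y \<in> carrier_vec 4 \<Longrightarrow> bilin A x y = bilin A y x"
  unfolding sym4_def by (intro bilin_sym) auto

lemma bilin_pencil:
  fixes A B :: "'a :: field mat"
  assumes "A \<in> carrier_mat n n" "B \<in> carrier_mat n n" "x \<in> carrier_vec n" "y \<in> carrier_vec n"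
  shows "bilin (a \<cdot>\<^sub>m A + b \<cdot>\<^sub>m B) x y = a * bilin A x y + b * bilin B x y"
proof -
  have "(a \<cdot>\<^sub>m A + b \<cdot>\<^sub>m B) *\<^sub>v y = a \<cdot>\<^sub>v (A *\<^sub>v y) + b \<cdot>\<^sub>v (B *\<^sub>v y)"
    using assms by (intro eq_vecI) (auto simp: scalar_prod_def sum.distrib sum_distrib_left algebra_simps)
  then show ?thesis
    unfolding bilin_def using assms by (simp add: scalar_prod_add_distrib[of _ n])
qed

lemma congruence_pencil:
  fixes A B R :: "'a :: field mat"
  assumes A: "A \<in> carrier_mat n n" and B: "B \<in> carrier_mat n n" and R: "R \<in> carrier_mat n n"
  shows "transpose_mat R * (a \<cdot>\<^sub>m A + b \<cdot>\<^sub>m B) * R =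
    a \<cdot>\<^sub>m (transpose_mat R * A * R) + b \<cdot>\<^sub>m (transpose_mat R * B * R)"
proof (rule eq_matI)
  fix i j
  assume "i < dim_row (a \<cdot>\<^sub>m (transpose_mat R * A * R) + b \<cdot>\<^sub>m (transpose_mat R * B * R))"
    "j < dim_col (a \<cdot>\<^sub>m (transpose_mat R * A * R) + b \<cdot>\<^sub>m (transpose_mat R * B * R))"
  then have ij: "i < n" "j < n"
    using R by auto
  have AB: "a \<cdot>\<^sub>m A + b \<cdot>\<^sub>m B \<in> carrier_mat n n"
    using A B by simp
  have "col R k \<in> carrier_vec n" for k
    using R by (auto intro!: carrier_vecI)
  then show "(transpose_mat R * (a \<cdot>\<^sub>m A + b \<cdot>\<^sub>m B) * R) $$ (i,j) =
      (a \<cdot>\<^sub>m (transpose_mat R * A * R) + b \<cdot>\<^sub>m (transpose_mat R * B * R)) $$ (i,j)"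
    using ij R
    by (simp add: index_congruence_mat[OF AB R ij] index_congruence_mat[OF A R ij]
      index_congruence_mat[OF B R ij] bilin_pencil[OF A B])
qed (use R in auto)

section \<open>Jordan structure of Segre type [(211)]\<close>

definition jordan_211_mat :: "nat \<Rightarrow> 'a :: {zero, one} \<Rightarrow> 'a mat" where
  "jordan_211_mat k l = mat 4 4 (\<lambda>(i,j). if i = j then l else if i = k \<and> j = Suc k then 1 else 0)"

lemma jordan_211_mat_carrier [simp]: "jordan_211_mat k l \<in> carrier_mat 4 4"
  unfolding jordan_211_mat_def by simp

lemma jordan_211_mat_dim [simp]: "dim_row (jordan_211_mat k l) = 4" "dim_col (jordan_211_mat k l) = 4"
  unfolding jordan_211_mat_def by simp_all

lemma index_jordan_211_mat:
  "i < 4 \<Longrightarrow> j < 4 \<Longrightarrow> jordan_211_mat k l $$ (i,j) = (if i = j then l else if i = k \<and> j = Suc k then 1 else 0)"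
  unfolding jordan_211_mat_def by simp

lemma jordan_matrix_eq_jordan_211_mat:
  "jordan_matrix [(2,l),(1,l),(1,l)] = jordan_211_mat 0 l"
  "jordan_matrix [(1,l),(2,l),(1,l)] = jordan_211_mat 1 l"
  "jordan_matrix [(1,l),(1,l),(2,l)] = jordan_211_mat 2 l"
  by (rule eq_matI; auto simp: jordan_matrix_Cons less_4_cases jordan_matrix_def index_jordan_211_mat)+

lemma mset_eq_211_cases:
  assumes "mset (xs :: nat list) = {#2, 1, 1#}"
  shows "xs = [2,1,1] \<or> xs = [1,2,1] \<or> xs = [1,1,2]"
proof -
  have "length xs = 3"
    using arg_cong[OF assms, of size] by simp
  then obtain a b c where xs: "xs = [a, b, c]"
    by (metis length_0_conv length_Suc_conv numeral_3_eq_3)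
  with assms have abc: "{#a, b, c#} = {#2, 1, 1#}"
    by simp
  have "set_mset {#a, b, c#} = {1, 2}"
    unfolding abc by auto
  then have "a \<in> {1, 2}" "b \<in> {1, 2}" "c \<in> {1, 2}"
    by auto
  moreover have "count {#a, b, c#} 2 = 1"
    unfolding abc by simp
  ultimately show ?thesis
    unfolding xs by (auto split: if_splits)
qed

text \<open>The blocks for \<open>l\<close> already fill the whole \<open>4 \<times> 4\<close> matrix, so there are no others.\<close>
lemma jordan_nf_211_cases:
  assumes M: "M \<in> carrier_mat 4 4" and jnf: "jordan_nf M n_as"
    and blocks: "mset (map fst (filter (\<lambda>p. snd p = l) n_as)) = {#2, 1, 1#}"
  shows "n_as = [(2,l),(1,l),(1,l)] \<or> n_as = [(1,l),(2,l),(1,l)] \<or> n_as = [(1,l),(1,l),(2,l)]"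
proof -
  have pos: "0 \<notin> fst ` set n_as" and sim: "similar_mat M (jordan_matrix n_as)"
    using jnf unfolding jordan_nf_def by auto
  have "jordan_matrix n_as \<in> carrier_mat 4 4"
    using similar_matD[OF sim] M by auto
  then have "sum_list (map fst n_as) = 4"
    using jordan_matrix_dim[of n_as] carrier_matD(1) by metis
  moreover have "sum_list (map fst n_as) =
      sum_list (map fst (filter (\<lambda>p. snd p = l) n_as)) + sum_list (map fst (filter (\<lambda>p. snd p \<noteq> l) n_as))"
    by (induction n_as) auto
  moreover have "sum_list (map fst (filter (\<lambda>p. snd p = l) n_as)) = 4"
    using sum_mset_sum_list[of "map fst (filter (\<lambda>p. snd p = l) n_as)"] unfolding blocks by simp
  ultimately have all_l: "\<forall>p\<in>set n_as. snd p = l"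
    using pos by (force simp: image_iff)
  then have "map fst n_as = ns \<Longrightarrow> n_as = map (\<lambda>n. (n, l)) ns" for ns
    by (induction n_as arbitrary: ns) auto
  moreover have "mset (map fst n_as) = {#2, 1, 1#}"
    using blocks all_l by (simp add: filter_id_conv)
  ultimately show ?thesis
    using mset_eq_211_cases by fastforce
qed

lemma jordan_nf_211_similar:
  assumes M: "M \<in> carrier_mat 4 4" and jnf: "jordan_nf M n_as"
    and blocks: "mset (map fst (filter (\<lambda>p. snd p = l) n_as)) = {#2, 1, 1#}"
  shows "\<exists>k<3. similar_mat M (jordan_211_mat k l)"
proof -
  have sim: "similar_mat M (jordan_matrix n_as)"
    using jnf unfolding jordan_nf_def by simp
  from jordan_nf_211_cases[OF assms] show ?thesis
  proof (elim disjE)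
    assume "n_as = [(2,l),(1,l),(1,l)]"
    then have "similar_mat M (jordan_211_mat 0 l)"
      using sim jordan_matrix_eq_jordan_211_mat(1)[of l] by (simp only:)
    then show ?thesis
      by (intro exI[of _ 0]) simp
  next
    assume "n_as = [(1,l),(2,l),(1,l)]"
    then have "similar_mat M (jordan_211_mat 1 l)"
      using sim jordan_matrix_eq_jordan_211_mat(2)[of l] by (simp only:)
    then show ?thesis
      by (intro exI[of _ 1]) simp
  next
    assume "n_as = [(1,l),(1,l),(2,l)]"
    then have "similar_mat M (jordan_211_mat 2 l)"
      using sim jordan_matrix_eq_jordan_211_mat(3)[of l] by (simp only:)
    then show ?thesis
      by (intro exI[of _ 2]) simp
  qed
qed

text \<open>If \<open>M = P J Q\<close> with \<open>Q = P\<^sup>-\<^sup>1\<close>, the off-diagonal 1 of \<open>J\<close> contributes the rank-one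
  matrix (column \<open>k\<close> of \<open>P\<close>)(row \<open>k + 1\<close> of \<open>Q\<close>).\<close>
lemma similar_jordan_211_mat_rank_one:
  fixes M :: "'a :: field mat"
  assumes M: "M \<in> carrier_mat 4 4" and sim: "similar_mat M (jordan_211_mat k l)" and k: "k < 3"
  obtains p q where "p \<in> carrier_vec 4" "q \<in> carrier_vec 4" "p \<noteq> 0\<^sub>v 4" "q \<noteq> 0\<^sub>v 4" "q \<bullet> p = 0"
    "\<And>i j. i < 4 \<Longrightarrow> j < 4 \<Longrightarrow> M $$ (i,j) = (if i = j then l else 0) + p$i * q$j"
proof -
  obtain n P Q where c: "{M, jordan_211_mat k l, P, Q} \<subseteq> carrier_mat n n"
    and PQ: "P * Q = 1\<^sub>m n" and QP: "Q * P = 1\<^sub>m n" and MPQ: "M = P * jordan_211_mat k l * Q"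
    using similar_matD[OF sim] by blast
  have n: "n = 4"
    using c M by auto
  have P: "P \<in> carrier_mat 4 4" and Q: "Q \<in> carrier_mat 4 4"
    using c n by auto
  define p where "p = col P k"
  define q where "q = row Q (Suc k)"
  have p: "p \<in> carrier_vec 4" and q: "q \<in> carrier_vec 4"
    unfolding p_def q_def using P Q by (auto intro!: carrier_vecI)
  have "k = 0 \<or> k = 1 \<or> k = 2"
    using k by auto
  have QP_index: "row Q i \<bullet> col P j = (if i = j then 1 else 0)" if "i < 4" "j < 4" for i j
    using arg_cong[OF QP, of "\<lambda>X. X $$ (i,j)"] n P Q that by simp
  have PJ: "(P * jordan_211_mat k l) $$ (i,m) = l * P $$ (i,m) + (if m = Suc k then P $$ (i,k) else 0)"
    if "i < 4" "m < 4" for i m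
    using that k P
    by (auto simp: index_mult_mat_4 index_jordan_211_mat less_4_cases numeral_2_eq_2[symmetric]
      simp del: index_mult_mat(1))
  have "M $$ (i,j) = (if i = j then l else 0) + p$i * q$j" if ij: "i < 4" "j < 4" for i j
  proof -
    have "M $$ (i,j) = (P * jordan_211_mat k l) $$ (i,0) * Q $$ (0,j) + (P * jordan_211_mat k l) $$ (i,1) * Q $$ (1,j)
        + (P * jordan_211_mat k l) $$ (i,2) * Q $$ (2,j) + (P * jordan_211_mat k l) $$ (i,3) * Q $$ (3,j)"
      unfolding MPQ using P Q ij by (intro index_mult_mat_4) auto
    also have "\<dots> = l * (P * Q) $$ (i,j) + P $$ (i,k) * Q $$ (Suc k, j)"
      using ij P Q \<open>k = 0 \<or> k = 1 \<or> k = 2\<close>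
      by (simp add: PJ index_mult_mat_4[OF P Q] del: index_mult_mat(1))
        (auto simp: algebra_simps numeral_2_eq_2[symmetric])
    finally show ?thesis
      unfolding PQ p_def q_def using ij k n P Q by simp
  qed
  moreover have "q \<bullet> p = 0"
    unfolding p_def q_def using QP_index[of "Suc k" k] k by simp
  moreover have "p \<noteq> 0\<^sub>v 4" "q \<noteq> 0\<^sub>v 4"
    using QP_index[of k k] QP_index[of "Suc k" "Suc k"] k P Q
    unfolding p_def q_def by (auto simp: carrier_vecI)
  ultimately show ?thesis
    using p q that by blast
qed

text \<open>Writing \<open>B = A M = l A + (A p) q\<^sup>T\<close>, symmetry of \<open>B\<close> forces \<open>q\<close> to be a multiple of \<open>A p\<close>.\<close>
lemma sym4_pencil_rank_one:
  fixes A B M :: "real mat"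
  assumes sA: "sym4 A" and sB: "sym4 B" and inv: "invertible_mat A" and AM: "A * M = B"
    and M: "M \<in> carrier_mat 4 4" and p: "p \<in> carrier_vec 4" "p \<noteq> 0\<^sub>v 4"
    and q: "q \<in> carrier_vec 4" "q \<noteq> 0\<^sub>v 4" and qp: "q \<bullet> p = 0"
    and M_index: "\<And>i j. i < 4 \<Longrightarrow> j < 4 \<Longrightarrow> M $$ (i,j) = (if i = j then l else 0) + p$i * q$j"
  obtains t where "t \<noteq> 0" "p \<bullet> (A *\<^sub>v p) = 0"
    "\<And>i j. i < 4 \<Longrightarrow> j < 4 \<Longrightarrow> B $$ (i,j) = l * A $$ (i,j) + t * ((A *\<^sub>v p)$i * (A *\<^sub>v p)$j)"
proof -
  have A: "A \<in> carrier_mat 4 4"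
    using sA unfolding sym4_def by simp
  define a where "a = A *\<^sub>v p"
  have a: "a \<in> carrier_vec 4" "a \<noteq> 0\<^sub>v 4"
    unfolding a_def using A p invertible_mat_mult_vec_nonzero[OF A inv p] by auto
  have B_index: "B $$ (i,j) = l * A $$ (i,j) + a$i * q$j" if "i < 4" "j < 4" for i j
    unfolding AM[symmetric] a_def using that A M p
    by (auto simp: index_mult_mat_4 index_mult_mat_vec_4 M_index less_4_cases algebra_simps
      simp del: index_mult_mat(1) index_mult_mat_vec)
  have sym: "X $$ (i,j) = X $$ (j,i)" if "sym4 X" "i < 4" "j < 4" for X i j
    using that unfolding sym4_def by (metis carrier_matD index_transpose_mat(1))
  obtain m where m: "m < 4" "a $ m \<noteq> 0"
    using a by (metis eq_vecI carrier_vecD index_zero_vec(1,2))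
  define t where "t = q $ m / a $ m"
  have q_eq: "q $ j = t * a $ j" if "j < 4" for j
    using B_index[OF m(1) that] B_index[OF that m(1)] sym[OF sA m(1) that] sym[OF sB m(1) that] m(2)
    unfolding t_def by (simp add: field_simps)
  have "t \<noteq> 0"
    using q q_eq by (metis eq_vecI carrier_vecD index_zero_vec mult_zero_left)
  moreover have "q \<bullet> p = t * (p \<bullet> a)"
    unfolding scalar_prod_4[OF q(1) p(1)] scalar_prod_4[OF p(1) a(1)] using q_eq
    by (simp add: algebra_simps)
  then have "p \<bullet> a = 0"
    using qp \<open>t \<noteq> 0\<close> by simp
  ultimately show ?thesis
    using that B_index q_eq unfolding a_def by (simp add: algebra_simps)
qed

section \<open>The canonical pencil\<close>

definition canon_A :: "real \<Rightarrow> real \<Rightarrow> real \<Rightarrow> real mat" where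
  "canon_A eps e2 e3 = mat_of_rows_list 4 [[0, eps, 0, 0], [eps, 0, 0, 0], [0, 0, e2, 0], [0, 0, 0, e3]]"

definition canon_B :: "real \<Rightarrow> real \<Rightarrow> real \<Rightarrow> real \<Rightarrow> real mat" where
  "canon_B eps l e2 e3 = mat_of_rows_list 4
     [[0, eps * l, 0, 0], [eps * l, eps, 0, 0], [0, 0, e2 * l, 0], [0, 0, 0, e3 * l]]"

lemma canon_sign_211_iff:
  "canon_sign_211 A B l eps \<longleftrightarrow> eps \<in> {-1, 1} \<and>
     (\<exists>Q e2 e3. Q \<in> carrier_mat 4 4 \<and> invertible_mat Q \<and> e2 \<in> {-1, 1} \<and> e3 \<in> {-1, 1} \<and>
        transpose_mat Q * A * Q = canon_A eps e2 e3 \<and> transpose_mat Q * B * Q = canon_B eps l e2 e3)"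
  unfolding canon_sign_211_def canon_A_def canon_B_def ..

lemma canon_A_carrier [simp]: "canon_A eps e2 e3 \<in> carrier_mat 4 4"
  unfolding canon_A_def carrier_mat_def by (simp add: mat_of_rows_list_def)

lemma canon_B_carrier [simp]: "canon_B eps l e2 e3 \<in> carrier_mat 4 4"
  unfolding canon_B_def carrier_mat_def by (simp add: mat_of_rows_list_def)

lemma canon_A_dim [simp]: "dim_row (canon_A eps e2 e3) = 4" "dim_col (canon_A eps e2 e3) = 4"
  and canon_B_dim [simp]: "dim_row (canon_B eps l e2 e3) = 4" "dim_col (canon_B eps l e2 e3) = 4"
  by (simp_all add: canon_A_def canon_B_def mat_of_rows_list_def)

lemma canon_A_index_Suc_0:
  "canon_A eps e2 e3 $$ (0,0) = 0" "canon_A eps e2 e3 $$ (0,1) = eps"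
  "canon_A eps e2 e3 $$ (0,2) = 0" "canon_A eps e2 e3 $$ (0,3) = 0"
  "canon_A eps e2 e3 $$ (1,0) = eps" "canon_A eps e2 e3 $$ (1,1) = 0"
  "canon_A eps e2 e3 $$ (1,2) = 0" "canon_A eps e2 e3 $$ (1,3) = 0"
  "canon_A eps e2 e3 $$ (2,0) = 0" "canon_A eps e2 e3 $$ (2,1) = 0"
  "canon_A eps e2 e3 $$ (2,2) = e2" "canon_A eps e2 e3 $$ (2,3) = 0"
  "canon_A eps e2 e3 $$ (3,0) = 0" "canon_A eps e2 e3 $$ (3,1) = 0"
  "canon_A eps e2 e3 $$ (3,2) = 0" "canon_A eps e2 e3 $$ (3,3) = e3"
  by (simp_all add: canon_A_def mat_of_rows_list_def)

lemma canon_B_index_Suc_0: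
  "canon_B eps l e2 e3 $$ (0,0) = 0" "canon_B eps l e2 e3 $$ (0,1) = eps * l"
  "canon_B eps l e2 e3 $$ (0,2) = 0" "canon_B eps l e2 e3 $$ (0,3) = 0"
  "canon_B eps l e2 e3 $$ (1,0) = eps * l" "canon_B eps l e2 e3 $$ (1,1) = eps"
  "canon_B eps l e2 e3 $$ (1,2) = 0" "canon_B eps l e2 e3 $$ (1,3) = 0"
  "canon_B eps l e2 e3 $$ (2,0) = 0" "canon_B eps l e2 e3 $$ (2,1) = 0"
  "canon_B eps l e2 e3 $$ (2,2) = e2 * l" "canon_B eps l e2 e3 $$ (2,3) = 0"
  "canon_B eps l e2 e3 $$ (3,0) = 0" "canon_B eps l e2 e3 $$ (3,1) = 0"
  "canon_B eps l e2 e3 $$ (3,2) = 0" "canon_B eps l e2 e3 $$ (3,3) = e3 * l"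
  by (simp_all add: canon_B_def mat_of_rows_list_def)

text \<open>The simplifier writes the index 1 sometimes as \<^term>\<open>Suc 0\<close>, so both forms are needed.\<close>
lemmas canon_A_index = canon_A_index_Suc_0 canon_A_index_Suc_0[unfolded One_nat_def]
lemmas canon_B_index = canon_B_index_Suc_0 canon_B_index_Suc_0[unfolded One_nat_def]

lemma sym4_canon_A: "sym4 (canon_A eps e2 e3)"
  and sym4_canon_B: "sym4 (canon_B eps l e2 e3)"
  unfolding sym4_def by (auto intro!: eq_matI simp: less_4_cases canon_A_index canon_B_index)

lemma det_canon_A: "det (canon_A eps e2 e3) = - (eps\<^sup>2 * e2 * e3)"
  by (subst det_4) (simp_all add: canon_A_index power2_eq_square)

lemma char_poly_canon_pencil:
  "char_poly (x \<cdot>\<^sub>m canon_A eps e2 e3 - canon_B eps l e2 e3) =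
     [:- (eps * (x - l))\<^sup>2, eps, 1:] * [:- (e2 * (x - l)), 1:] * [:- (e3 * (x - l)), 1:]"
proof -
  let ?S = "x \<cdot>\<^sub>m canon_A eps e2 e3 - canon_B eps l e2 e3"
  have S: "?S \<in> carrier_mat 4 4"
    by (simp add: minus_carrier_mat)
  have C: "- char_matrix ?S t \<in> carrier_mat 4 4" for t
    using S by simp
  have entry: "(- char_matrix ?S t) $$ (i,j) =
      (if i = j then t else 0) - (x * canon_A eps e2 e3 $$ (i,j) - canon_B eps l e2 e3 $$ (i,j))"
    if "i < 4" "j < 4" for i j t
    using that by (simp add: char_matrix_def)
  have "poly (char_poly ?S) t =
      poly ([:- (eps * (x - l))\<^sup>2, eps, 1:] * [:- (e2 * (x - l)), 1:] * [:- (e3 * (x - l)), 1:]) t" for t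
    unfolding char_poly_matrix[OF S] det_4[OF C]
    by (simp only: entry zero_less_numeral one_less_numeral_iff numeral_less_iff semiring_norm)
      (simp add: canon_A_index canon_B_index algebra_simps power2_eq_square)
  then show ?thesis
    using poly_eq_poly_eq_iff by blast
qed

lemma det_canon_pencil:
  "det (x \<cdot>\<^sub>m canon_A eps e2 e3 - canon_B eps l e2 e3) = - (eps\<^sup>2 * e2 * e3 * (x - l) ^ 4)"
proof -
  have "x \<cdot>\<^sub>m canon_A eps e2 e3 - canon_B eps l e2 e3 \<in> carrier_mat 4 4"
    by (simp add: minus_carrier_mat)
  from poly_char_poly_0[OF this] show ?thesis
    by (simp add: char_poly_canon_pencil power2_eq_square power4_eq_xxxx algebra_simps)
qed

lemma poly_pencil_poly:
  assumes "A \<in> carrier_mat n n" "B \<in> carrier_mat n n"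
  shows "poly (pencil_poly A B) x = det (x \<cdot>\<^sub>m A - B)"
  unfolding pencil_poly_def using assms by (intro poly_det_cong[of _ n]) auto

lemma pencil_poly_canon:
  "pencil_poly (canon_A eps e2 e3) (canon_B eps l e2 e3) =
     Polynomial.smult (- (eps\<^sup>2 * e2 * e3)) ([:- l, 1:] ^ 4)"
proof -
  have "poly (pencil_poly (canon_A eps e2 e3) (canon_B eps l e2 e3)) x =
      poly (Polynomial.smult (- (eps\<^sup>2 * e2 * e3)) ([:- l, 1:] ^ 4)) x" for x
    by (simp add: poly_pencil_poly[of _ 4] det_canon_pencil)
  then show ?thesis
    using poly_eq_poly_eq_iff by blast
qed

lemma Id_canon:
  assumes "x \<noteq> l" and "eps \<noteq> 0"
  shows "Id (canon_A eps e2 e3) (canon_B eps l e2 e3) x =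
    1 + of_bool (e2 * (x - l) > 0) + of_bool (e3 * (x - l) > 0)"
proof -
  define Q where "Q = [:- (eps * (x - l))\<^sup>2, eps, 1:]"
  have Q: "Q \<noteq> 0"
    unfolding Q_def by simp
  have QL: "Q * [:- (e2 * (x - l)), 1:] \<noteq> 0"
    using Q by (metis mult_eq_0_iff pCons_eq_0_iff zero_neq_one)
  have "Id (canon_A eps e2 e3) (canon_B eps l e2 e3) x =
      pos_roots_count Q + of_bool (e2 * (x - l) > 0) + of_bool (e3 * (x - l) > 0)"
    unfolding Id_def num_pos_eig_eq_pos_roots_count char_poly_canon_pencil Q_def[symmetric]
    by (simp only: pos_roots_count_mult_linear[OF Q] pos_roots_count_mult_linear[OF QL])
  moreover have "pos_roots_count Q = 1"
    unfolding Q_def using assms by (intro pos_roots_count_monic_quadratic) simp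
  ultimately show ?thesis
    by simp
qed

lemma canon_A_mult_jordan_211_mat: "canon_A eps e2 e3 * jordan_211_mat 0 l = canon_B eps l e2 e3"
  by (rule eq_matI)
    (auto simp: index_mult_mat_4 less_4_cases canon_A_index canon_B_index index_jordan_211_mat
      simp del: index_mult_mat(1))

lemma segre_211_canon:
  assumes "eps \<noteq> 0" "e2 \<noteq> 0" "e3 \<noteq> 0"
  shows "segre_211 (canon_A eps e2 e3) (canon_B eps l e2 e3) l"
  unfolding segre_211_def
proof (intro conjI exI)
  show "invertible_mat (canon_A eps e2 e3)"
    using assms by (simp add: invertible_mat_iff_det_nonzero[of _ 4] det_canon_A)
  show "jordan_nf (jordan_211_mat 0 l) [(2,l),(1,l),(1,l)]"
    unfolding jordan_nf_def jordan_matrix_eq_jordan_211_mat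
    using similar_mat_refl[OF jordan_211_mat_carrier] by auto
qed (simp_all add: canon_A_mult_jordan_211_mat)

lemma canon_sign_211_canon:
  assumes "eps \<in> {-1, 1}" "e2 \<in> {-1, 1}" "e3 \<in> {-1, 1}"
  shows "canon_sign_211 (canon_A eps e2 e3) (canon_B eps l e2 e3) l eps"
  unfolding canon_sign_211_iff
  using assms by (intro conjI exI[of _ "1\<^sub>m 4"] exI[of _ e2] exI[of _ e3])
    (auto simp: invertible_mat_iff_det_nonzero[of _ 4])

lemma index_seq_211_canon:
  assumes "eps \<in> {-1, 1}" "e2 \<in> {-1, 1}" "e3 \<in> {-1, 1}"
  shows "index_seq_211 (canon_A eps e2 e3) (canon_B eps l e2 e3)
    (1 + of_bool (e2 < 0) + of_bool (e3 < 0)) eps (1 + of_bool (e2 > 0) + of_bool (e3 > 0))"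
  unfolding index_seq_211_def
proof (intro conjI exI[of _ l] allI impI)
  have nz: "eps \<noteq> 0" "e2 \<noteq> 0" "e3 \<noteq> 0" "eps\<^sup>2 * e2 * e3 \<noteq> 0"
    using assms by auto
  show "pencil_poly (canon_A eps e2 e3) (canon_B eps l e2 e3) \<noteq> 0"
    "order l (pencil_poly (canon_A eps e2 e3) (canon_B eps l e2 e3)) = 4"
    unfolding pencil_poly_canon using nz order_power_n_n[of l 4] by (simp_all add: order_smult)
  show "segre_211 (canon_A eps e2 e3) (canon_B eps l e2 e3) l"
    using nz(1-3) by (rule segre_211_canon)
  show "canon_sign_211 (canon_A eps e2 e3) (canon_B eps l e2 e3) l eps"
    using assms by (rule canon_sign_211_canon)
  fix x
  show "x < l \<Longrightarrow> Id (canon_A eps e2 e3) (canon_B eps l e2 e3) x = 1 + of_bool (e2 < 0) + of_bool (e3 < 0)"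
    and "x > l \<Longrightarrow> Id (canon_A eps e2 e3) (canon_B eps l e2 e3) x = 1 + of_bool (e2 > 0) + of_bool (e3 > 0)"
    using nz by (simp_all add: Id_canon zero_less_mult_iff)
qed (simp_all add: sym4_canon_A sym4_canon_B)

lemma even_Id_if_congruent_canon:
  fixes A B Q :: "real mat"
  assumes A: "A \<in> carrier_mat 4 4" and B: "B \<in> carrier_mat 4 4" and Q: "Q \<in> carrier_mat 4 4"
    and QA: "transpose_mat Q * A * Q = canon_A eps e2 e3" and QB: "transpose_mat Q * B * Q = canon_B eps l e2 e3"
    and signs: "eps \<in> {-1, 1}" "e2 \<in> {-1, 1}" "e3 \<in> {-1, 1}" and x: "x \<noteq> l"
  shows "even (Id A B x) \<longleftrightarrow> e2 * e3 = -1"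
proof -
  define S where "S = x \<cdot>\<^sub>m A + (-1) \<cdot>\<^sub>m B"
  have S: "S \<in> carrier_mat 4 4" and S_eq: "x \<cdot>\<^sub>m A - B = S"
    unfolding S_def using A B by (auto intro!: eq_matI)
  have "transpose_mat Q * S * Q = x \<cdot>\<^sub>m canon_A eps e2 e3 + (-1) \<cdot>\<^sub>m canon_B eps l e2 e3"
    unfolding S_def congruence_pencil[OF A B Q] QA QB ..
  also have "\<dots> = x \<cdot>\<^sub>m canon_A eps e2 e3 - canon_B eps l e2 e3"
    by (intro eq_matI) auto
  finally have "det (transpose_mat Q * S * Q) = - (eps\<^sup>2 * e2 * e3 * (x - l) ^ 4)"
    by (simp add: det_canon_pencil)
  then have "(det Q)\<^sup>2 * det S = - (eps\<^sup>2 * e2 * e3 * (x - l) ^ 4)"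
    unfolding det_congruence[OF Q S] .
  moreover have "eps\<^sup>2 = 1" and e23: "e2 * e3 \<in> {-1, 1}" and pos: "(x - l) ^ 4 > 0"
    using x signs by auto
  ultimately have eq: "(det Q)\<^sup>2 * det S = - (e2 * e3) * (x - l) ^ 4"
    by simp
  then have "det S \<noteq> 0" and "(det Q)\<^sup>2 > 0"
    using e23 pos by (auto simp: zero_less_power2)
  then have "det S > 0 \<longleftrightarrow> (det Q)\<^sup>2 * det S > 0"
    by (simp add: zero_less_mult_iff)
  also have "\<dots> \<longleftrightarrow> e2 * e3 = -1"
    unfolding eq using e23 pos by (auto simp: zero_less_mult_iff)
  finally have "det S > 0 \<longleftrightarrow> e2 * e3 = -1" .
  then show ?thesis
    unfolding Id_def S_eq using even_num_pos_eig_iff_det_pos[OF S] \<open>det S \<noteq> 0\<close> by simp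
qed

section \<open>Reduction to the canonical pencil\<close>

lemma not_spanned_by_three:
  fixes r0 r1 r2 :: "'a :: field vec"
  assumes r: "r0 \<in> carrier_vec 4" "r1 \<in> carrier_vec 4" "r2 \<in> carrier_vec 4"
  shows "\<exists>x\<in>carrier_vec 4. \<forall>c0 c1 c2. x \<noteq> c0 \<cdot>\<^sub>v r0 + c1 \<cdot>\<^sub>v r1 + c2 \<cdot>\<^sub>v r2"
proof (rule ccontr)
  assume "\<not> ?thesis"
  then have span: "\<forall>x\<in>carrier_vec 4. \<exists>c0 c1 c2. x = c0 \<cdot>\<^sub>v r0 + c1 \<cdot>\<^sub>v r1 + c2 \<cdot>\<^sub>v r2"
    by blast
  have "\<forall>j. \<exists>c :: nat \<Rightarrow> 'a. j < 4 \<longrightarrow> unit_vec 4 j = c 0 \<cdot>\<^sub>v r0 + c 1 \<cdot>\<^sub>v r1 + c 2 \<cdot>\<^sub>v r2"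
  proof
    fix j
    obtain c0 c1 c2 where "unit_vec 4 j = c0 \<cdot>\<^sub>v r0 + c1 \<cdot>\<^sub>v r1 + c2 \<cdot>\<^sub>v r2"
      using span unit_vec_carrier by blast
    then show "\<exists>c :: nat \<Rightarrow> 'a. j < 4 \<longrightarrow> unit_vec 4 j = c 0 \<cdot>\<^sub>v r0 + c 1 \<cdot>\<^sub>v r1 + c 2 \<cdot>\<^sub>v r2"
      by (intro exI[of _ "\<lambda>k. if k = 0 then c0 else if k = 1 then c1 else c2"]) simp
  qed
  then obtain c :: "nat \<Rightarrow> nat \<Rightarrow> 'a"
    where c: "\<And>j. j < 4 \<Longrightarrow> unit_vec 4 j = c j 0 \<cdot>\<^sub>v r0 + c j 1 \<cdot>\<^sub>v r1 + c j 2 \<cdot>\<^sub>v r2"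
    by (metis choice)
  define R :: "'a mat" where
    "R = mat 4 4 (\<lambda>(i,k). if k = 0 then r0 $ i else if k = 1 then r1 $ i else if k = 2 then r2 $ i else 0)"
  define C :: "'a mat" where "C = mat 4 4 (\<lambda>(k,j). if k < 3 then c j k else 0)"
  have RC: "R \<in> carrier_mat 4 4" "C \<in> carrier_mat 4 4"
    unfolding R_def C_def by auto
  have "R * C = 1\<^sub>m 4"
  proof (rule eq_matI)
    fix i j
    assume "i < dim_row (1\<^sub>m 4 :: 'a mat)" "j < dim_col (1\<^sub>m 4 :: 'a mat)"
    then have ij: "i < 4" "j < 4"
      by auto
    have "(1\<^sub>m 4 :: 'a mat) $$ (i,j) = unit_vec 4 j $ i"
      using ij by simp
    also have "\<dots> = (R * C) $$ (i,j)"
      unfolding c[OF ij(2)] index_mult_mat_4[OF RC ij] using ij r by (simp add: R_def C_def)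
    finally show "(R * C) $$ (i,j) = 1\<^sub>m 4 $$ (i,j)"
      by simp
  qed (auto simp: R_def C_def)
  moreover have "det R = 0"
    by (subst det_4[OF RC(1)]) (simp add: R_def)
  ultimately show False
    using det_mult[OF RC] by simp
qed

text \<open>A nondegenerate form cannot vanish identically on a complement of the span of three vectors:
  by polarization the complement would be orthogonal to everything.\<close>
lemma anisotropic_vector_in_complement:
  fixes A :: "real mat" and pi :: "real vec \<Rightarrow> real vec"
  assumes sA: "sym4 A" and inv: "invertible_mat A"
    and r: "r0 \<in> carrier_vec 4" "r1 \<in> carrier_vec 4" "r2 \<in> carrier_vec 4"
    and pi: "\<And>x. x \<in> carrier_vec 4 \<Longrightarrow> pi x \<in> carrier_vec 4"
    and pi_add: "\<And>x y. x \<in> carrier_vec 4 \<Longrightarrow> y \<in> carrier_vec 4 \<Longrightarrow> pi (x + y) = pi x + pi y"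
    and orth: "\<And>x. x \<in> carrier_vec 4 \<Longrightarrow> bilin A (pi x) r0 = 0 \<and> bilin A (pi x) r1 = 0 \<and> bilin A (pi x) r2 = 0"
    and decomp: "\<And>x. x \<in> carrier_vec 4 \<Longrightarrow> \<exists>c0 c1 c2. x = pi x + (c0 \<cdot>\<^sub>v r0 + c1 \<cdot>\<^sub>v r1 + c2 \<cdot>\<^sub>v r2)"
  shows "\<exists>x\<in>carrier_vec 4. bilin A (pi x) (pi x) \<noteq> 0"
proof (rule ccontr)
  assume "\<not> ?thesis"
  then have iso: "\<And>x. x \<in> carrier_vec 4 \<Longrightarrow> bilin A (pi x) (pi x) = 0"
    by auto
  have A: "A \<in> carrier_mat 4 4"
    using sA unfolding sym4_def by simp
  have iso2: "bilin A (pi x) (pi y) = 0" if x: "x \<in> carrier_vec 4" and y: "y \<in> carrier_vec 4" for x y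
  proof -
    have "0 = bilin A (pi (x + y)) (pi (x + y))"
      using iso x y by simp
    also have "\<dots> = 2 * bilin A (pi x) (pi y)"
      unfolding pi_add[OF x y] using pi[OF x] pi[OF y] iso[OF x] iso[OF y] bilin_sym4[OF sA pi[OF x] pi[OF y]]
      by (simp add: bilin_add_left[OF A] bilin_add_right[OF A])
    finally show ?thesis
      by simp
  qed
  have pi_0: "pi x = 0\<^sub>v 4" if x: "x \<in> carrier_vec 4" for x
  proof (rule bilin_nondegenerate[OF A inv pi[OF x]])
    fix y :: "real vec"
    assume y: "y \<in> carrier_vec 4"
    then obtain c0 c1 c2 where y_eq: "y = pi y + (c0 \<cdot>\<^sub>v r0 + c1 \<cdot>\<^sub>v r1 + c2 \<cdot>\<^sub>v r2)"
      using decomp by blast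
    have "bilin A (pi x) y = bilin A (pi x) (pi y + (c0 \<cdot>\<^sub>v r0 + c1 \<cdot>\<^sub>v r1 + c2 \<cdot>\<^sub>v r2))"
      using arg_cong[OF y_eq, of "bilin A (pi x)"] .
    also have "\<dots> = 0"
      using iso2[OF x y] orth[OF x] pi[OF x] pi[OF y] r
      by (simp add: bilin_add_right[OF A] bilin_smult_right[OF A])
    finally show "bilin A (pi x) y = 0" .
  qed
  have "\<exists>c0 c1 c2. x = c0 \<cdot>\<^sub>v r0 + c1 \<cdot>\<^sub>v r1 + c2 \<cdot>\<^sub>v r2" if x: "x \<in> carrier_vec 4" for x
  proof -
    obtain c0 c1 c2 where "x = pi x + (c0 \<cdot>\<^sub>v r0 + c1 \<cdot>\<^sub>v r1 + c2 \<cdot>\<^sub>v r2)"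
      using decomp[OF x] by blast
    then have "x = c0 \<cdot>\<^sub>v r0 + c1 \<cdot>\<^sub>v r1 + c2 \<cdot>\<^sub>v r2"
      unfolding pi_0[OF x] using r by simp
    then show ?thesis
      by blast
  qed
  then show False
    using not_spanned_by_three[OF r] by blast
qed

lemma sqrt_abs_normalize:
  fixes g :: real
  assumes "g \<noteq> 0"
  shows "(1 / sqrt \<bar>g\<bar>) * (1 / sqrt \<bar>g\<bar>) * g \<in> {-1, 1}"
proof -
  have "(1 / sqrt \<bar>g\<bar>) * (1 / sqrt \<bar>g\<bar>) = 1 / \<bar>g\<bar>"
    by (simp flip: real_sqrt_mult)
  then show ?thesis
    using assms by (cases "g > 0") auto
qed

lemma exists_hyperbolic_partner:
  fixes A :: "real mat"
  assumes sA: "sym4 A" and inv: "invertible_mat A" and p: "p \<in> carrier_vec 4" "p \<noteq> 0\<^sub>v 4"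
    and pp: "bilin A p p = 0"
  obtains u where "u \<in> carrier_vec 4" "bilin A u p = 1" "bilin A u u = 0"
proof -
  have A: "A \<in> carrier_mat 4 4"
    using sA unfolding sym4_def by simp
  note L = bilin_linear[OF A]
  define a where "a = A *\<^sub>v p"
  have a: "a \<in> carrier_vec 4" "a \<noteq> 0\<^sub>v 4"
    unfolding a_def using A p invertible_mat_mult_vec_nonzero[OF A inv p] by auto
  have "a \<bullet> a \<noteq> 0"
    using scalar_prod_self_eq_0 a by blast
  define u0 where "u0 = (1 / (a \<bullet> a)) \<cdot>\<^sub>v a"
  have u0: "u0 \<in> carrier_vec 4" and u0p: "bilin A u0 p = 1"
    unfolding u0_def bilin_def a_def[symmetric] using a \<open>a \<bullet> a \<noteq> 0\<close> by auto
  have pu0: "bilin A p u0 = 1"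
    using bilin_sym4[OF sA p(1) u0] u0p by simp
  define u where "u = u0 - (bilin A u0 u0 / 2) \<cdot>\<^sub>v p"
  have "u \<in> carrier_vec 4" "bilin A u p = 1" "bilin A u u = 0"
    unfolding u_def using u0 p by (simp_all add: L u0p pu0 pp)
  then show ?thesis
    using that by blast
qed

lemma exists_normalized_orthogonal:
  fixes A :: "real mat"
  assumes sA: "sym4 A" and inv: "invertible_mat A"
    and vecs: "p \<in> carrier_vec 4" "u \<in> carrier_vec 4" "z \<in> carrier_vec 4"
    and pp: "bilin A p p = 0" and uu: "bilin A u u = 0" and up: "bilin A u p = 1"
    and zp: "bilin A z p = 0" and zu: "bilin A z u = 0" and zz: "z = 0\<^sub>v 4 \<or> bilin A z z \<in> {-1, 1}"
  obtains w where "w \<in> carrier_vec 4" "bilin A w p = 0" "bilin A w u = 0" "bilin A w z = 0"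
    "bilin A w w \<in> {-1, 1}"
proof -
  have A: "A \<in> carrier_mat 4 4"
    using sA unfolding sym4_def by simp
  note L = bilin_linear[OF A]
  have sym: "bilin A p u = 1" "bilin A p z = 0" "bilin A u z = 0"
    using bilin_sym4[OF sA] vecs up zp zu by metis+
  define f where "f = bilin A z z"
  have ff: "bilin A x z - f * bilin A x z * f = 0" if "x \<in> carrier_vec 4" for x
    using zz that vecs unfolding f_def by (auto simp: L)
  define pi where "pi x = x - bilin A x u \<cdot>\<^sub>v p - bilin A x p \<cdot>\<^sub>v u - (f * bilin A x z) \<cdot>\<^sub>v z" for x
  have pi: "pi x \<in> carrier_vec 4" if "x \<in> carrier_vec 4" for x
    unfolding pi_def using that vecs by simp
  have "\<exists>x\<in>carrier_vec 4. bilin A (pi x) (pi x) \<noteq> 0"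
  proof (rule anisotropic_vector_in_complement[OF sA inv vecs pi])
    show "pi (x + y) = pi x + pi y" if "x \<in> carrier_vec 4" "y \<in> carrier_vec 4" for x y
      unfolding pi_def using that vecs by (intro eq_vecI) (simp_all add: L algebra_simps)
    show "bilin A (pi x) p = 0 \<and> bilin A (pi x) u = 0 \<and> bilin A (pi x) z = 0" if "x \<in> carrier_vec 4" for x
      unfolding pi_def using that vecs ff[OF that] by (simp add: L pp uu up zp zu sym f_def[symmetric])
    show "\<exists>c0 c1 c2. x = pi x + (c0 \<cdot>\<^sub>v p + c1 \<cdot>\<^sub>v u + c2 \<cdot>\<^sub>v z)" if "x \<in> carrier_vec 4" for x
      unfolding pi_def using that vecs
      by (intro exI[of _ "bilin A x u"] exI[of _ "bilin A x p"] exI[of _ "f * bilin A x z"] eq_vecI) auto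
  qed
  then obtain x where x: "x \<in> carrier_vec 4" and g: "bilin A (pi x) (pi x) \<noteq> 0"
    by blast
  define c where "c = 1 / sqrt \<bar>bilin A (pi x) (pi x)\<bar>"
  have "bilin A (pi x) p = 0" "bilin A (pi x) u = 0" "bilin A (pi x) z = 0"
    unfolding pi_def using x vecs ff[OF x] by (simp_all add: L pp uu up zp zu sym f_def[symmetric])
  moreover have "bilin A (c \<cdot>\<^sub>v pi x) (c \<cdot>\<^sub>v pi x) \<in> {-1, 1}"
    using sqrt_abs_normalize[OF g] pi[OF x] unfolding c_def by (simp add: L mult.assoc)
  ultimately show ?thesis
    using that[of "c \<cdot>\<^sub>v pi x"] pi[OF x] vecs by (simp add: L)
qed

lemma hyperbolic_frame:
  fixes A :: "real mat"
  assumes sA: "sym4 A" and inv: "invertible_mat A" and p: "p \<in> carrier_vec 4" "p \<noteq> 0\<^sub>v 4"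
    and pp: "bilin A p p = 0"
  obtains u z3 z4 where "u \<in> carrier_vec 4" "z3 \<in> carrier_vec 4" "z4 \<in> carrier_vec 4"
    "bilin A u p = 1" "bilin A u u = 0" "bilin A z3 p = 0" "bilin A z3 u = 0"
    "bilin A z4 p = 0" "bilin A z4 u = 0" "bilin A z4 z3 = 0"
    "bilin A z3 z3 \<in> {-1, 1}" "bilin A z4 z4 \<in> {-1, 1}"
proof -
  have A: "A \<in> carrier_mat 4 4"
    using sA unfolding sym4_def by simp
  obtain u where u: "u \<in> carrier_vec 4" "bilin A u p = 1" "bilin A u u = 0"
    using exists_hyperbolic_partner[OF sA inv p pp] by blast
  obtain z3 where z3: "z3 \<in> carrier_vec 4" "bilin A z3 p = 0" "bilin A z3 u = 0" "bilin A z3 z3 \<in> {-1, 1}"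
    using exists_normalized_orthogonal[OF sA inv p(1) u(1) zero_carrier_vec pp u(3,2)]
      bilin_zero_left[OF A] p u by metis
  obtain z4 where "z4 \<in> carrier_vec 4" "bilin A z4 p = 0" "bilin A z4 u = 0" "bilin A z4 z3 = 0"
    "bilin A z4 z4 \<in> {-1, 1}"
    using exists_normalized_orthogonal[OF sA inv p(1) u(1) z3(1) pp u(3,2) z3(2,3)] z3(4) by blast
  with u z3 show ?thesis
    using that by blast
qed

lemma bilin_rank_one_update:
  fixes A B :: "'a :: field mat"
  assumes A: "A \<in> carrier_mat 4 4" and B: "B \<in> carrier_mat 4 4" and p: "p \<in> carrier_vec 4"
    and B_index: "\<And>i j. i < 4 \<Longrightarrow> j < 4 \<Longrightarrow> B $$ (i,j) = l * A $$ (i,j) + t * ((A *\<^sub>v p)$i * (A *\<^sub>v p)$j)"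
    and x: "x \<in> carrier_vec 4" and y: "y \<in> carrier_vec 4"
  shows "bilin B x y = l * bilin A x y + t * (bilin A x p * bilin A y p)"
proof -
  define a where "a = A *\<^sub>v p"
  have a: "a \<in> carrier_vec 4"
    unfolding a_def using A p by simp
  have "B *\<^sub>v y = l \<cdot>\<^sub>v (A *\<^sub>v y) + (t * (y \<bullet> a)) \<cdot>\<^sub>v a"
    using A B a y
    by (intro eq_vecI) (simp_all add: index_mult_mat_vec_4 B_index scalar_prod_4 a_def[symmetric]
      algebra_simps del: index_mult_mat_vec)
  then show ?thesis
    unfolding bilin_def a_def[symmetric] using x y a A
    by (simp add: scalar_prod_add_distrib[of _ 4] comm_scalar_prod[of y 4 a])
qed

lemma hyperbolic_basis:
  fixes A :: "real mat"
  assumes sA: "sym4 A" and inv: "invertible_mat A" and p: "p \<in> carrier_vec 4" "p \<noteq> 0\<^sub>v 4"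
    and pp: "bilin A p p = 0"
  obtains Q f e where "Q \<in> carrier_mat 4 4" "f \<in> {-1, 1}" "e \<in> {-1, 1}"
    "transpose_mat Q * A * Q = f \<cdot>\<^sub>m canon_A (-1) 1 e"
    "\<And>i. i < 4 \<Longrightarrow> bilin A (col Q i) p = (if i = 1 then - f else 0)"
proof -
  have A: "A \<in> carrier_mat 4 4"
    using sA unfolding sym4_def by simp
  note L = bilin_linear[OF A]
  obtain u z3 z4 where vecs: "u \<in> carrier_vec 4" "z3 \<in> carrier_vec 4" "z4 \<in> carrier_vec 4"
    and frame: "bilin A u p = 1" "bilin A u u = 0" "bilin A z3 p = 0" "bilin A z3 u = 0"
      "bilin A z4 p = 0" "bilin A z4 u = 0" "bilin A z4 z3 = 0"
    and f3: "bilin A z3 z3 \<in> {-1, 1}" and f4: "bilin A z4 z4 \<in> {-1, 1}"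
    using hyperbolic_frame[OF sA inv p pp] by blast
  have frame_sym: "bilin A p u = 1" "bilin A p z3 = 0" "bilin A u z3 = 0" "bilin A p z4 = 0"
    "bilin A u z4 = 0" "bilin A z3 z4 = 0"
    using frame bilin_sym4[OF sA] p vecs by metis+
  define f where "f = bilin A z3 z3"
  define e where "e = f * bilin A z4 z4"
  have e: "e \<in> {-1, 1}" and ff: "f * f = 1"
    using f3 f4 unfolding e_def f_def by auto
  define vs where "vs = [p, (- f) \<cdot>\<^sub>v u, z3, z4]"
  have vs: "set vs \<subseteq> carrier_vec 4" "length vs = 4"
    unfolding vs_def using p vecs by auto
  define Q where "Q = mat_of_cols 4 vs"
  have Q: "Q \<in> carrier_mat 4 4"
    unfolding Q_def using mat_of_cols_carrier(1)[of 4 vs] vs(2) by simp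
  have cols: "col Q i = vs ! i" if "i < 4" for i
    unfolding Q_def by (rule col_mat_of_cols) (use that vs in auto)
  have "transpose_mat Q * A * Q = f \<cdot>\<^sub>m canon_A (-1) 1 e"
  proof (rule eq_matI)
    fix i j
    assume "i < dim_row (f \<cdot>\<^sub>m canon_A (-1) 1 e)" "j < dim_col (f \<cdot>\<^sub>m canon_A (-1) 1 e)"
    then have ij: "i < 4" "j < 4"
      by auto
    show "(transpose_mat Q * A * Q) $$ (i,j) = (f \<cdot>\<^sub>m canon_A (-1) 1 e) $$ (i,j)"
      unfolding index_congruence_mat[OF A Q ij] cols[OF ij(1)] cols[OF ij(2)] using ij p vecs ff
      by (auto simp: less_4_cases vs_def L frame frame_sym pp canon_A_index e_def f_def[symmetric])
  qed (use Q in auto)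
  moreover have "bilin A (col Q i) p = (if i = 1 then - f else 0)" if "i < 4" for i
    unfolding cols[OF that] using that p vecs by (auto simp: less_4_cases vs_def L frame pp)
  ultimately show ?thesis
    using that Q f3 e unfolding f_def by blast
qed

text \<open>In the basis of the previous lemma, \<open>(l A - B) / t = - (A p) (A p)\<^sup>T\<close> becomes the
  second matrix of the canonical pair.\<close>
lemma pencil_equiv_canon:
  fixes A B :: "real mat"
  assumes sA: "sym4 A" and sB: "sym4 B" and inv: "invertible_mat A"
    and p: "p \<in> carrier_vec 4" "p \<noteq> 0\<^sub>v 4" and t: "t \<noteq> 0" and pp: "bilin A p p = 0"
    and B_index: "\<And>i j. i < 4 \<Longrightarrow> j < 4 \<Longrightarrow> B $$ (i,j) = l * A $$ (i,j) + t * ((A *\<^sub>v p)$i * (A *\<^sub>v p)$j)"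
  shows "\<exists>e\<in>{-1, 1}. pencil_equiv A B (canon_A (-1) 1 e) (canon_B (-1) 0 1 e)"
proof -
  have A: "A \<in> carrier_mat 4 4" and B: "B \<in> carrier_mat 4 4"
    using sA sB unfolding sym4_def by simp_all
  obtain Q f e where Q: "Q \<in> carrier_mat 4 4" and f: "f \<in> {-1, 1}" and e: "e \<in> {-1, 1}"
    and QAQ: "transpose_mat Q * A * Q = f \<cdot>\<^sub>m canon_A (-1) 1 e"
    and Qp: "\<And>i. i < 4 \<Longrightarrow> bilin A (col Q i) p = (if i = 1 then - f else 0)"
    using hyperbolic_basis[OF sA inv p pp] by metis
  have cols: "col Q i \<in> carrier_vec 4" for i
    using Q by (auto intro!: carrier_vecI)
  have bilin_B: "bilin B (col Q i) (col Q j) =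
      l * bilin A (col Q i) (col Q j) + t * (bilin A (col Q i) p * bilin A (col Q j) p)" for i j
    using bilin_rank_one_update[OF A B p(1) B_index cols cols] .
  have QA: "transpose_mat Q * (f \<cdot>\<^sub>m A + 0 \<cdot>\<^sub>m B) * Q = canon_A (-1) 1 e"
    unfolding congruence_pencil[OF A B Q] QAQ using f Q B by (auto intro!: eq_matI)
  have QB: "transpose_mat Q * ((l / t) \<cdot>\<^sub>m A + (- 1 / t) \<cdot>\<^sub>m B) * Q = canon_B (-1) 0 1 e"
  proof (rule eq_matI)
    fix i j
    assume "i < dim_row (canon_B (-1) 0 1 e)" "j < dim_col (canon_B (-1) 0 1 e)"
    then have ij: "i < 4" "j < 4"
      by auto
    have M: "(l / t) \<cdot>\<^sub>m A + (- 1 / t) \<cdot>\<^sub>m B \<in> carrier_mat 4 4"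
      using A B by simp
    show "(transpose_mat Q * ((l / t) \<cdot>\<^sub>m A + (- 1 / t) \<cdot>\<^sub>m B) * Q) $$ (i,j) = canon_B (-1) 0 1 e $$ (i,j)"
      unfolding index_congruence_mat[OF M Q ij] bilin_pencil[OF A B cols cols]
        bilin_B Qp[OF ij(1)] Qp[OF ij(2)]
      using ij f t by (auto simp: less_4_cases canon_B_index field_simps)
  qed (use Q in auto)
  have "det (transpose_mat Q * (f \<cdot>\<^sub>m A + 0 \<cdot>\<^sub>m B) * Q) \<noteq> 0"
    unfolding QA det_canon_A using e by auto
  then have "det Q \<noteq> 0"
    using Q A B by (auto simp: det_congruence[of _ 4])
  then have "pencil_equiv A B (canon_A (-1) 1 e) (canon_B (-1) 0 1 e)"
    unfolding pencil_equiv_def using Q QA QB f t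
    by (intro exI[of _ Q] exI[of _ f] exI[of _ 0] exI[of _ "l / t"] exI[of _ "- 1 / t"])
      (auto simp: invertible_mat_iff_det_nonzero)
  then show ?thesis
    using e by blast
qed

lemma segre_211_pencil_equiv_canon:
  fixes A B :: "real mat"
  assumes sA: "sym4 A" and sB: "sym4 B" and segre: "segre_211 A B l"
  shows "\<exists>e\<in>{-1, 1}. pencil_equiv A B (canon_A (-1) 1 e) (canon_B (-1) 0 1 e)"
proof -
  obtain M n_as where inv: "invertible_mat A" and M: "M \<in> carrier_mat 4 4" and AM: "A * M = B"
    and jnf: "jordan_nf M n_as" and blocks: "mset (map fst (filter (\<lambda>p. snd p = l) n_as)) = {#2, 1, 1#}"
    using segre unfolding segre_211_def by blast
  obtain k where k: "k < 3" and sim: "similar_mat M (jordan_211_mat k l)"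
    using jordan_nf_211_similar[OF M jnf blocks] by blast
  obtain p q where p: "p \<in> carrier_vec 4" "p \<noteq> 0\<^sub>v 4" and q: "q \<in> carrier_vec 4" "q \<noteq> 0\<^sub>v 4"
    and qp: "q \<bullet> p = 0" and M_index: "\<And>i j. i < 4 \<Longrightarrow> j < 4 \<Longrightarrow> M $$ (i,j) = (if i = j then l else 0) + p$i * q$j"
    using similar_jordan_211_mat_rank_one[OF M sim k] by metis
  obtain t where "t \<noteq> 0" "p \<bullet> (A *\<^sub>v p) = 0"
    "\<And>i j. i < 4 \<Longrightarrow> j < 4 \<Longrightarrow> B $$ (i,j) = l * A $$ (i,j) + t * ((A *\<^sub>v p)$i * (A *\<^sub>v p)$j)"
    using sym4_pencil_rank_one[OF sA sB inv AM M p q qp M_index] by metis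
  then show ?thesis
    using pencil_equiv_canon[OF sA sB inv p] unfolding bilin_def by blast
qed

section \<open>The intersection curve\<close>

lemma cmat_carrier [simp]: "cmat A \<in> carrier_mat n m \<longleftrightarrow> A \<in> carrier_mat n m"
  unfolding cmat_def by simp

lemma cmat_dim [simp]: "dim_row (cmat A) = dim_row A" "dim_col (cmat A) = dim_col A"
  unfolding cmat_def by simp_all

lemma index_cmat [simp]: "i < dim_row A \<Longrightarrow> j < dim_col A \<Longrightarrow> cmat A $$ (i,j) = complex_of_real (A $$ (i,j))"
  unfolding cmat_def by simp

lemma cmat_mult: "A \<in> carrier_mat nr n \<Longrightarrow> B \<in> carrier_mat n nc \<Longrightarrow> cmat (A * B) = cmat A * cmat B"
  unfolding cmat_def by (rule of_real_hom.mat_hom_mult)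

lemma cmat_one: "cmat (1\<^sub>m n) = 1\<^sub>m n"
  unfolding cmat_def by (rule of_real_hom.mat_hom_one)

lemma cmat_transpose: "cmat (transpose_mat A) = transpose_mat (cmat A)"
  unfolding cmat_def by (rule map_mat_transpose[symmetric])

lemma cmat_pencil_mult_vec:
  assumes A: "A \<in> carrier_mat n n" and B: "B \<in> carrier_mat n n" and X: "X \<in> carrier_vec n"
  shows "cmat (a \<cdot>\<^sub>m A + b \<cdot>\<^sub>m B) *\<^sub>v X =
    complex_of_real a \<cdot>\<^sub>v (cmat A *\<^sub>v X) + complex_of_real b \<cdot>\<^sub>v (cmat B *\<^sub>v X)"
  using A B X
  by (intro eq_vecI) (auto simp: scalar_prod_def sum.distrib sum_distrib_left algebra_simps)

lemma quad_form_pencil: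
  assumes A: "A \<in> carrier_mat n n" and B: "B \<in> carrier_mat n n" and X: "X \<in> carrier_vec n"
  shows "quad_form (a \<cdot>\<^sub>m A + b \<cdot>\<^sub>m B) X = complex_of_real a * quad_form A X + complex_of_real b * quad_form B X"
  unfolding quad_form_def cmat_pencil_mult_vec[OF assms] using assms
  by (simp add: scalar_prod_add_distrib[of _ n])

lemma qsic_pencil_change:
  assumes A: "A \<in> carrier_mat 4 4" and B: "B \<in> carrier_mat 4 4" and det: "a * d - b * c \<noteq> 0"
  shows "qsic (a \<cdot>\<^sub>m A + b \<cdot>\<^sub>m B) (c \<cdot>\<^sub>m A + d \<cdot>\<^sub>m B) = qsic A B"
proof -
  have "quad_form (a \<cdot>\<^sub>m A + b \<cdot>\<^sub>m B) X = 0 \<and> quad_form (c \<cdot>\<^sub>m A + d \<cdot>\<^sub>m B) X = 0 \<longleftrightarrow>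
      quad_form A X = 0 \<and> quad_form B X = 0" if X: "X \<in> carrier_vec 4" for X
  proof -
    let ?a = "complex_of_real a" and ?b = "complex_of_real b"
      and ?c = "complex_of_real c" and ?d = "complex_of_real d"
    have "?a * ?d - ?b * ?c \<noteq> 0"
      using det by (metis of_real_mult of_real_diff of_real_eq_0_iff)
    moreover have "(?a * ?d - ?b * ?c) * qA = ?d * (?a * qA + ?b * qB) - ?b * (?c * qA + ?d * qB)"
      and "(?a * ?d - ?b * ?c) * qB = ?a * (?c * qA + ?d * qB) - ?c * (?a * qA + ?b * qB)" for qA qB
      by (simp_all add: algebra_simps)
    ultimately show ?thesis
      unfolding quad_form_pencil[OF A B X] by (metis mult_eq_0_iff mult_zero_right diff_zero add_0)
  qed
  then show ?thesis
    unfolding qsic_def by auto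
qed

lemma tangent_along_if_pencil_kernel:
  assumes A: "A \<in> carrier_mat 4 4" and B: "B \<in> carrier_mat 4 4" and nz: "(c, d) \<noteq> (0, 0)"
    and ker: "\<And>X. X \<in> L \<Longrightarrow> X \<in> carrier_vec 4 \<and> cmat (c \<cdot>\<^sub>m A + d \<cdot>\<^sub>m B) *\<^sub>v X = 0\<^sub>v 4"
  shows "tangent_along A B L"
  unfolding tangent_along_def
proof
  fix X
  assume "X \<in> L"
  then show "\<exists>a b. (a, b) \<noteq> (0, 0) \<and> a \<cdot>\<^sub>v (cmat A *\<^sub>v X) + b \<cdot>\<^sub>v (cmat B *\<^sub>v X) = 0\<^sub>v 4"
    using nz ker[of X] cmat_pencil_mult_vec[OF A B, of X c d]
    by (intro exI[of _ "complex_of_real c"] exI[of _ "complex_of_real d"]) auto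
qed

lemma quad_form_congruence:
  assumes M: "M \<in> carrier_mat n n" and R: "R \<in> carrier_mat n n" and Y: "Y \<in> carrier_vec n"
  shows "quad_form M (cmat R *\<^sub>v Y) = quad_form (transpose_mat R * M * R) Y"
proof -
  have cR: "cmat R \<in> carrier_mat n n" and cM: "cmat M \<in> carrier_mat n n"
    and cRT: "transpose_mat (cmat R) \<in> carrier_mat n n"
    using R M by auto
  define W where "W = cmat M *\<^sub>v (cmat R *\<^sub>v Y)"
  have W: "W \<in> carrier_vec n"
    unfolding W_def using cM cR Y by simp
  have "cmat (transpose_mat R * M * R) = transpose_mat (cmat R) * cmat M * cmat R"
    using R M by (simp only: cmat_mult[of _ n n _ n] mult_carrier_mat transpose_carrier_mat cmat_transpose)
  also have "\<dots> *\<^sub>v Y = transpose_mat (cmat R) *\<^sub>v W"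
    unfolding W_def using assoc_mult_mat_vec[OF cRT mult_carrier_mat[OF cM cR] Y]
      assoc_mult_mat_vec[OF cM cR Y] assoc_mult_mat[OF cRT cM cR] by simp
  finally have "cmat (transpose_mat R * M * R) *\<^sub>v Y = transpose_mat (cmat R) *\<^sub>v W" .
  then have "quad_form (transpose_mat R * M * R) Y = (transpose_mat (cmat R) *\<^sub>v W) \<bullet> Y"
    unfolding quad_form_def using Y W cRT by (simp add: comm_scalar_prod[of _ n])
  also have "\<dots> = W \<bullet> (cmat R *\<^sub>v Y)"
    by (rule transpose_vec_mult_scalar[OF cR Y W])
  also have "\<dots> = quad_form M (cmat R *\<^sub>v Y)"
    unfolding quad_form_def W_def using Y W cR cM by (simp add: comm_scalar_prod[of _ n])
  finally show ?thesis ..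
qed

lemma quad_form_canon_A:
  assumes Y: "Y \<in> carrier_vec 4"
  shows "quad_form (canon_A eps e2 e3) Y =
    2 * complex_of_real eps * Y$0 * Y$1 + complex_of_real e2 * (Y$2)\<^sup>2 + complex_of_real e3 * (Y$3)\<^sup>2"
proof -
  have K: "cmat (canon_A eps e2 e3) \<in> carrier_mat 4 4"
    by simp
  show ?thesis
    unfolding quad_form_def scalar_prod_4[OF Y mult_mat_vec_carrier[OF K Y]]
    by (simp add: index_mult_mat_vec_4[OF K Y] canon_A_index power2_eq_square algebra_simps
      del: index_mult_mat_vec)
qed

lemma quad_form_canon_B_0:
  assumes Y: "Y \<in> carrier_vec 4"
  shows "quad_form (canon_B eps 0 e2 e3) Y = complex_of_real eps * (Y$1)\<^sup>2"
proof -
  have K: "cmat (canon_B eps 0 e2 e3) \<in> carrier_mat 4 4"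
    by simp
  show ?thesis
    unfolding quad_form_def scalar_prod_4[OF Y mult_mat_vec_carrier[OF K Y]]
    by (simp add: index_mult_mat_vec_4[OF K Y] canon_B_index power2_eq_square del: index_mult_mat_vec)
qed

lemma canon_B_0_mult_vec:
  assumes Y: "Y \<in> carrier_vec 4" and "Y$1 = 0"
  shows "cmat (canon_B eps 0 e2 e3) *\<^sub>v Y = 0\<^sub>v 4"
proof -
  have K: "cmat (canon_B eps 0 e2 e3) \<in> carrier_mat 4 4"
    by simp
  show ?thesis
    using assms
    by (intro eq_vecI) (auto simp: index_mult_mat_vec_4[OF K Y] canon_B_index less_4_cases
      simp del: index_mult_mat_vec)
qed

definition canon_line :: "real mat \<Rightarrow> complex \<Rightarrow> complex vec set" where
  "canon_line R z = {a \<cdot>\<^sub>v col (cmat R) 0 + b \<cdot>\<^sub>v (col (cmat R) 2 + z \<cdot>\<^sub>v col (cmat R) 3) | a b. True}"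

context
  fixes R Ri :: "real mat"
  assumes R: "R \<in> carrier_mat 4 4" and Ri: "Ri \<in> carrier_mat 4 4"
    and R_Ri: "R * Ri = 1\<^sub>m 4" and Ri_R: "Ri * R = 1\<^sub>m 4"
begin

private lemma cmat_R: "cmat R \<in> carrier_mat 4 4" and cmat_Ri: "cmat Ri \<in> carrier_mat 4 4"
  using R Ri by simp_all

private lemma cmat_Ri_R: "cmat Ri * cmat R = 1\<^sub>m 4" and cmat_R_Ri: "cmat R * cmat Ri = 1\<^sub>m 4"
  using cmat_mult[OF Ri R] cmat_mult[OF R Ri] Ri_R R_Ri cmat_one by metis+

private lemma col_cmat_R: "col (cmat R) k \<in> carrier_vec 4"
  using R by (auto intro!: carrier_vecI)

private lemma cmat_Ri_mult_col: "k < 4 \<Longrightarrow> cmat Ri *\<^sub>v col (cmat R) k = unit_vec 4 k"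
  using col_mult2[OF cmat_Ri cmat_R, of k] cmat_Ri_R by simp

private lemma cmat_Ri_mult_canon_line:
  "cmat Ri *\<^sub>v (a \<cdot>\<^sub>v col (cmat R) 0 + b \<cdot>\<^sub>v (col (cmat R) 2 + z \<cdot>\<^sub>v col (cmat R) 3)) =
    a \<cdot>\<^sub>v unit_vec 4 0 + b \<cdot>\<^sub>v (unit_vec 4 2 + z \<cdot>\<^sub>v unit_vec 4 3)"
  using col_cmat_R cmat_Ri
  by (simp add: mult_add_distrib_mat_vec[OF cmat_Ri] mult_mat_vec[OF cmat_Ri] cmat_Ri_mult_col)

private lemma cmat_R_mult_cmat_Ri: "X \<in> carrier_vec 4 \<Longrightarrow> cmat R *\<^sub>v (cmat Ri *\<^sub>v X) = X"
  using assoc_mult_mat_vec[OF cmat_R cmat_Ri, of X] cmat_R_Ri by simp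

lemma canon_line_carrier: "canon_line R z \<subseteq> carrier_vec 4"
  unfolding canon_line_def using col_cmat_R by auto

lemma mem_canon_line_iff:
  assumes X: "X \<in> carrier_vec 4"
  shows "X \<in> canon_line R z \<longleftrightarrow> (cmat Ri *\<^sub>v X) $ 1 = 0 \<and> (cmat Ri *\<^sub>v X) $ 3 = z * (cmat Ri *\<^sub>v X) $ 2"
proof
  assume "X \<in> canon_line R z"
  then obtain a b where "X = a \<cdot>\<^sub>v col (cmat R) 0 + b \<cdot>\<^sub>v (col (cmat R) 2 + z \<cdot>\<^sub>v col (cmat R) 3)"
    unfolding canon_line_def by auto
  then show "(cmat Ri *\<^sub>v X) $ 1 = 0 \<and> (cmat Ri *\<^sub>v X) $ 3 = z * (cmat Ri *\<^sub>v X) $ 2"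
    by (simp add: cmat_Ri_mult_canon_line)
next
  define Y where "Y = cmat Ri *\<^sub>v X"
  assume "(cmat Ri *\<^sub>v X) $ 1 = 0 \<and> (cmat Ri *\<^sub>v X) $ 3 = z * (cmat Ri *\<^sub>v X) $ 2"
  then have Y13: "Y $ 1 = 0" "Y $ 3 = z * Y $ 2"
    unfolding Y_def by simp_all
  have Y: "Y \<in> carrier_vec 4"
    unfolding Y_def using cmat_Ri X by simp
  have "X = cmat R *\<^sub>v Y"
    unfolding Y_def using cmat_R_mult_cmat_Ri[OF X] by simp
  also have "\<dots> = Y $ 0 \<cdot>\<^sub>v col (cmat R) 0 + Y $ 2 \<cdot>\<^sub>v (col (cmat R) 2 + z \<cdot>\<^sub>v col (cmat R) 3)"
    using Y13 col_cmat_R cmat_R Y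
    by (intro eq_vecI)
      (simp_all add: index_mult_mat_vec_4[OF cmat_R Y] algebra_simps del: index_mult_mat_vec index_cmat)
  finally show "X \<in> canon_line R z"
    unfolding canon_line_def by blast
qed

lemma col_0_mem_canon_line: "col (cmat R) 0 \<in> canon_line R z"
proof -
  have "col (cmat R) 0 = 1 \<cdot>\<^sub>v col (cmat R) 0 + 0 \<cdot>\<^sub>v (col (cmat R) 2 + z \<cdot>\<^sub>v col (cmat R) 3)"
    using col_cmat_R by (intro eq_vecI) auto
  then show ?thesis
    unfolding canon_line_def by blast
qed

lemma col_0_nonzero: "col (cmat R) 0 \<noteq> 0\<^sub>v 4"
proof
  assume "col (cmat R) 0 = 0\<^sub>v 4"
  then have "unit_vec 4 0 = (0\<^sub>v 4 :: complex vec)"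
    using cmat_Ri_mult_col[of 0] mult_mat_vec_zero_right[OF cmat_Ri] by simp
  then show False
    using arg_cong[of _ _ "\<lambda>v. v $ 0"]
    by (metis index_unit_vec(2) index_zero_vec(1) zero_less_numeral zero_neq_one)
qed

lemma canon_line_is_line: "is_line (canon_line R z)"
  unfolding is_line_def canon_line_def
proof (intro exI conjI allI impI)
  show "col (cmat R) 0 \<in> carrier_vec 4" "col (cmat R) 2 + z \<cdot>\<^sub>v col (cmat R) 3 \<in> carrier_vec 4"
    using col_cmat_R by auto
  fix a b
  assume "a \<cdot>\<^sub>v col (cmat R) 0 + b \<cdot>\<^sub>v (col (cmat R) 2 + z \<cdot>\<^sub>v col (cmat R) 3) = 0\<^sub>v 4"
  from arg_cong[OF this, of "\<lambda>v. cmat Ri *\<^sub>v v"]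
  have "a \<cdot>\<^sub>v unit_vec 4 0 + b \<cdot>\<^sub>v (unit_vec 4 2 + z \<cdot>\<^sub>v unit_vec 4 3) = (0\<^sub>v 4 :: complex vec)"
    unfolding cmat_Ri_mult_canon_line mult_mat_vec_zero_right[OF cmat_Ri] .
  from arg_cong[OF this, of "\<lambda>v. v $ 0"] arg_cong[OF this, of "\<lambda>v. v $ 2"]
  show "a = 0" "b = 0"
    by auto
qed rule

lemma canon_line_neq:
  assumes "z \<noteq> z'"
  shows "canon_line R z \<noteq> canon_line R z'"
proof
  let ?q = "col (cmat R) 2 + z \<cdot>\<^sub>v col (cmat R) 3"
  assume "canon_line R z = canon_line R z'"
  moreover have "?q \<in> canon_line R z"
    unfolding canon_line_def using col_cmat_R
    by (intro CollectI exI[of _ 0] exI[of _ 1] conjI eq_vecI) auto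
  ultimately have "(cmat Ri *\<^sub>v ?q) $ 3 = z' * (cmat Ri *\<^sub>v ?q) $ 2"
    using mem_canon_line_iff[of ?q] col_cmat_R by auto
  moreover have "cmat Ri *\<^sub>v ?q = unit_vec 4 2 + z \<cdot>\<^sub>v unit_vec 4 3"
    using col_cmat_R
    by (simp add: mult_add_distrib_mat_vec[OF cmat_Ri] mult_mat_vec[OF cmat_Ri] cmat_Ri_mult_col)
  ultimately show False
    using assms by simp
qed

lemma conj_set_canon_line: "conj_set (canon_line R z) = canon_line R (cnj z)"
proof -
  define v where "v a b w = a \<cdot>\<^sub>v col (cmat R) 0 + b \<cdot>\<^sub>v (col (cmat R) 2 + w \<cdot>\<^sub>v col (cmat R) 3)" for a b w
  have real_entry: "cnj (col (cmat R) k $ i) = col (cmat R) k $ i" if "i < 4" "k < 4" for i k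
    using R that by simp
  have conj: "map_vec cnj (v a b w) = v (cnj a) (cnj b) (cnj w)" for a b w
    unfolding v_def using col_cmat_R R by (intro eq_vecI) (auto simp: real_entry)
  have "conj_set {v a b z | a b. True} = {v a b (cnj z) | a b. True}"
  proof (intro equalityI subsetI)
    fix X
    assume "X \<in> conj_set {v a b z | a b. True}"
    then obtain a b where "X = v (cnj a) (cnj b) (cnj z)"
      unfolding conj_set_def using conj by auto
    then show "X \<in> {v a b (cnj z) | a b. True}"
      by blast
  next
    fix X
    assume "X \<in> {v a b (cnj z) | a b. True}"
    then obtain a b where "X = map_vec cnj (v (cnj a) (cnj b) z)"
      using conj by auto
    then show "X \<in> conj_set {v a b z | a b. True}"
      unfolding conj_set_def by blast
  qed
  then show ?thesis
    unfolding canon_line_def v_def .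
qed

lemma cmat_mult_vec_canon_line:
  assumes B: "B \<in> carrier_mat 4 4" and RB: "transpose_mat R * B * R = canon_B eps 0 e2 e3"
    and X: "X \<in> canon_line R z"
  shows "cmat B *\<^sub>v X = 0\<^sub>v 4"
proof -
  have Xc: "X \<in> carrier_vec 4"
    using X canon_line_carrier by auto
  define Y where "Y = cmat Ri *\<^sub>v X"
  have Y: "Y \<in> carrier_vec 4" and Y1: "Y $ 1 = 0"
    unfolding Y_def using cmat_Ri Xc X mem_canon_line_iff[OF Xc] by auto
  have RiT: "transpose_mat Ri \<in> carrier_mat 4 4" and K: "canon_B eps 0 e2 e3 \<in> carrier_mat 4 4"
    using Ri by simp_all
  have "B = transpose_mat Ri * canon_B eps 0 e2 e3 * Ri"
    using congruence_inverse[OF R Ri R_Ri B RB] .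
  then have "cmat B = transpose_mat (cmat Ri) * cmat (canon_B eps 0 e2 e3) * cmat Ri"
    using RiT K Ri by (simp only: cmat_mult[of _ 4 4 _ 4] mult_carrier_mat cmat_transpose)
  moreover have cRiT: "transpose_mat (cmat Ri) \<in> carrier_mat 4 4"
    and cK: "cmat (canon_B eps 0 e2 e3) \<in> carrier_mat 4 4"
    using Ri by simp_all
  ultimately have "cmat B *\<^sub>v X = transpose_mat (cmat Ri) *\<^sub>v (cmat (canon_B eps 0 e2 e3) *\<^sub>v Y)"
    unfolding Y_def
    using assoc_mult_mat_vec[OF mult_carrier_mat[OF cRiT cK] cmat_Ri Xc]
      assoc_mult_mat_vec[OF cRiT cK mult_mat_vec_carrier[OF cmat_Ri Xc]] by simp
  also have "\<dots> = 0\<^sub>v 4"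
    unfolding canon_B_0_mult_vec[OF Y Y1] using cRiT by (rule mult_mat_vec_zero_right)
  finally show ?thesis .
qed

lemma qsic_canon:
  assumes A: "A \<in> carrier_mat 4 4" and B: "B \<in> carrier_mat 4 4"
    and RA: "transpose_mat R * A * R = canon_A eps e2 e3" and RB: "transpose_mat R * B * R = canon_B eps 0 e2 e3"
    and "eps \<noteq> 0" "e3 \<noteq> 0" and z: "complex_of_real e2 + complex_of_real e3 * z\<^sup>2 = 0"
  shows "qsic A B = (canon_line R z \<union> canon_line R (- z)) - {0\<^sub>v 4}"
proof -
  have "quad_form A X = 0 \<and> quad_form B X = 0 \<longleftrightarrow> X \<in> canon_line R z \<or> X \<in> canon_line R (- z)"
    if X: "X \<in> carrier_vec 4" for X
  proof -
    define Y where "Y = cmat Ri *\<^sub>v X"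
    have Y: "Y \<in> carrier_vec 4"
      unfolding Y_def using cmat_Ri X by simp
    have XY: "X = cmat R *\<^sub>v Y"
      unfolding Y_def using cmat_R_mult_cmat_Ri[OF X] by simp
    have "complex_of_real e2 * (Y$2)\<^sup>2 + complex_of_real e3 * (Y$3)\<^sup>2 =
        complex_of_real e3 * ((Y$3 - z * Y$2) * (Y$3 + z * Y$2))"
      using z by (simp add: algebra_simps power2_eq_square eq_neg_iff_add_eq_0[symmetric])
    then have "quad_form A X = 0 \<and> quad_form B X = 0 \<longleftrightarrow> Y$1 = 0 \<and> (Y$3 = z * Y$2 \<or> Y$3 = - z * Y$2)"
      unfolding XY quad_form_congruence[OF A R Y] quad_form_congruence[OF B R Y] RA RB
        quad_form_canon_A[OF Y] quad_form_canon_B_0[OF Y]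
      using assms(5,6) by (auto simp: add_eq_0_iff)
    then show ?thesis
      unfolding mem_canon_line_iff[OF X] Y_def[symmetric] by auto
  qed
  then show ?thesis
    unfolding qsic_def using canon_line_carrier by blast
qed

end

lemma qsic_two_double_lines_canon:
  fixes A B R :: "real mat"
  assumes A: "A \<in> carrier_mat 4 4" and B: "B \<in> carrier_mat 4 4" and R: "R \<in> carrier_mat 4 4"
    and inv: "invertible_mat R" and det: "a * d - b * c \<noteq> 0"
    and RA: "transpose_mat R * (a \<cdot>\<^sub>m A + b \<cdot>\<^sub>m B) * R = canon_A eps e2 e3"
    and RB: "transpose_mat R * (c \<cdot>\<^sub>m A + d \<cdot>\<^sub>m B) * R = canon_B eps l e2 e3"
    and "eps \<noteq> 0" "e3 \<noteq> 0" and z: "complex_of_real e2 + complex_of_real e3 * z\<^sup>2 = 0" "z \<noteq> 0"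
  shows "qsic_two_double_lines A B (canon_line R z) (canon_line R (- z))"
proof -
  obtain Ri where Ri: "Ri \<in> carrier_mat 4 4" "R * Ri = 1\<^sub>m 4" "Ri * R = 1\<^sub>m 4"
    using invertible_mat_inverse[OF R inv] by metis
  define c' d' where "c' = c - l * a" and "d' = d - l * b"
  define A1 B1 where "A1 = a \<cdot>\<^sub>m A + b \<cdot>\<^sub>m B" and "B1 = c' \<cdot>\<^sub>m A + d' \<cdot>\<^sub>m B"
  have A1: "A1 \<in> carrier_mat 4 4" and B1: "B1 \<in> carrier_mat 4 4"
    unfolding A1_def B1_def using A B by auto
  have det': "a * d' - b * c' \<noteq> 0"
    unfolding c'_def d'_def using det by (simp add: algebra_simps)
  have CD: "c \<cdot>\<^sub>m A + d \<cdot>\<^sub>m B \<in> carrier_mat 4 4"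
    using A B by simp
  text \<open>Subtracting \<open>l\<close> times the first quadric leaves the rank-one \<open>diag (0, eps, 0, 0)\<close>.\<close>
  have "B1 = (- l) \<cdot>\<^sub>m A1 + 1 \<cdot>\<^sub>m (c \<cdot>\<^sub>m A + d \<cdot>\<^sub>m B)"
    unfolding A1_def B1_def c'_def d'_def using A B by (intro eq_matI) (auto simp: algebra_simps)
  then have "transpose_mat R * B1 * R =
      (- l) \<cdot>\<^sub>m (transpose_mat R * A1 * R) + 1 \<cdot>\<^sub>m (transpose_mat R * (c \<cdot>\<^sub>m A + d \<cdot>\<^sub>m B) * R)"
    using congruence_pencil[OF A1 CD R] by simp
  also have "\<dots> = canon_B eps 0 e2 e3"
    unfolding A1_def RA RB by (auto intro!: eq_matI simp: less_4_cases canon_A_index canon_B_index)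
  finally have RB1: "transpose_mat R * B1 * R = canon_B eps 0 e2 e3" .
  have lines: "qsic A B = (canon_line R z \<union> canon_line R (- z)) - {0\<^sub>v 4}"
    using qsic_pencil_change[OF A B det'] qsic_canon[OF R Ri A1 B1 RA[folded A1_def] RB1] assms(8-10)
    unfolding A1_def B1_def by simp
  have tangent: "tangent_along A B (canon_line R w)" for w
  proof (rule tangent_along_if_pencil_kernel[OF A B])
    show "(c', d') \<noteq> (0, 0)"
      using det' by auto
    show "X \<in> carrier_vec 4 \<and> cmat (c' \<cdot>\<^sub>m A + d' \<cdot>\<^sub>m B) *\<^sub>v X = 0\<^sub>v 4" if "X \<in> canon_line R w" for X
      using that canon_line_carrier[OF R Ri] cmat_mult_vec_canon_line[OF R Ri B1 RB1]
      unfolding B1_def by auto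
  qed
  show ?thesis
    unfolding qsic_two_double_lines_def
    using lines tangent canon_line_is_line[OF R Ri] canon_line_neq[OF R Ri, of z "- z"] z(2)
    by auto
qed

lemma qsic_congruent_canon:
  fixes A B R :: "real mat"
  assumes A: "A \<in> carrier_mat 4 4" and B: "B \<in> carrier_mat 4 4" and R: "R \<in> carrier_mat 4 4"
    and inv: "invertible_mat R" and det: "a * d - b * c \<noteq> 0"
    and RA: "transpose_mat R * (a \<cdot>\<^sub>m A + b \<cdot>\<^sub>m B) * R = canon_A eps e2 e3"
    and RB: "transpose_mat R * (c \<cdot>\<^sub>m A + d \<cdot>\<^sub>m B) * R = canon_B eps l e2 e3"
    and signs: "eps \<in> {-1, 1}" "e2 \<in> {-1, 1}" "e3 \<in> {-1, 1}"
  shows "(e2 * e3 = -1 \<longrightarrow> qsic_real_intersecting_lines_double A B)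
    \<and> (e2 * e3 = 1 \<longrightarrow> qsic_conj_lines_double A B)"
proof -
  obtain Ri where Ri: "Ri \<in> carrier_mat 4 4" "R * Ri = 1\<^sub>m 4" "Ri * R = 1\<^sub>m 4"
    using invertible_mat_inverse[OF R inv] by metis
  note two_lines = qsic_two_double_lines_canon[OF A B R inv det RA RB]
  have nz: "eps \<noteq> 0" "e3 \<noteq> 0"
    using signs by auto
  show ?thesis
  proof (intro conjI impI)
    assume "e2 * e3 = -1"
    then have "complex_of_real e2 + complex_of_real e3 * 1\<^sup>2 = 0"
      using signs by auto
    then have "qsic_two_double_lines A B (canon_line R 1) (canon_line R (- 1))"
      using two_lines nz by simp
    moreover have "real_line (canon_line R 1)" "real_line (canon_line R (- 1))"
      unfolding real_line_def using canon_line_is_line[OF R Ri] conj_set_canon_line[OF R Ri] by simp_all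
    moreover have "col (cmat R) 0 \<in> canon_line R 1 \<inter> canon_line R (- 1)" "col (cmat R) 0 \<noteq> 0\<^sub>v 4"
      using col_0_mem_canon_line[OF R Ri] col_0_nonzero[OF R Ri] by auto
    ultimately show "qsic_real_intersecting_lines_double A B"
      unfolding qsic_real_intersecting_lines_double_def by blast
  next
    assume "e2 * e3 = 1"
    then have "complex_of_real e2 + complex_of_real e3 * \<i>\<^sup>2 = 0"
      using signs by auto
    then have "qsic_two_double_lines A B (canon_line R \<i>) (canon_line R (- \<i>))"
      using two_lines nz by simp
    then show "qsic_conj_lines_double A B"
      unfolding qsic_conj_lines_double_def using conj_set_canon_line[OF R Ri, of \<i>]
      by (intro exI[of _ "canon_line R \<i>"]) simp
  qed
qed

lemma qsic_if_index_seq_equiv: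
  fixes A B :: "real mat"
  assumes sA: "sym4 A" and sB: "sym4 B" and equiv: "index_seq_equiv_211 A B s0 eps s1"
  shows "(even s0 \<longrightarrow> qsic_real_intersecting_lines_double A B) \<and> (odd s0 \<longrightarrow> qsic_conj_lines_double A B)"
proof -
  have A: "A \<in> carrier_mat 4 4" and B: "B \<in> carrier_mat 4 4"
    using sA sB unfolding sym4_def by simp_all
  obtain A' B' P a b c d where P: "P \<in> carrier_mat 4 4" "invertible_mat P" and det: "a * d - b * c \<noteq> 0"
    and A': "A' = transpose_mat P * (a \<cdot>\<^sub>m A + b \<cdot>\<^sub>m B) * P"
    and B': "B' = transpose_mat P * (c \<cdot>\<^sub>m A + d \<cdot>\<^sub>m B) * P"
    and index: "index_seq_211 A' B' s0 eps s1"
    using equiv unfolding index_seq_equiv_211_def pencil_equiv_def by blast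
  obtain l where canon: "canon_sign_211 A' B' l eps" and Id_below: "\<forall>x<l. Id A' B' x = s0"
    using index unfolding index_seq_211_def by blast
  then obtain Q e2 e3 where Q: "Q \<in> carrier_mat 4 4" "invertible_mat Q" and eps: "eps \<in> {-1, 1}"
    and signs: "e2 \<in> {-1, 1}" "e3 \<in> {-1, 1}"
    and QA: "transpose_mat Q * A' * Q = canon_A eps e2 e3" and QB: "transpose_mat Q * B' * Q = canon_B eps l e2 e3"
    unfolding canon_sign_211_iff by blast
  have Id: "Id A' B' (l - 1) = s0"
    using Id_below by simp
  have congr_carrier: "transpose_mat P * M * P \<in> carrier_mat 4 4" if "M \<in> carrier_mat 4 4" for M
    using that P(1) by (metis mult_carrier_mat transpose_carrier_mat)
  have "A' \<in> carrier_mat 4 4" "B' \<in> carrier_mat 4 4"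
    unfolding A' B' using A B by (simp_all add: congr_carrier)
  then have "even s0 \<longleftrightarrow> e2 * e3 = -1"
    using even_Id_if_congruent_canon[OF _ _ Q(1) QA QB eps signs, of "l - 1"] Id by simp
  moreover have "invertible_mat (P * Q)"
    using P Q by (simp add: invertible_mat_iff_det_nonzero[of _ 4] det_mult[of _ 4])
  moreover have "transpose_mat (P * Q) * (a \<cdot>\<^sub>m A + b \<cdot>\<^sub>m B) * (P * Q) = canon_A eps e2 e3"
    "transpose_mat (P * Q) * (c \<cdot>\<^sub>m A + d \<cdot>\<^sub>m B) * (P * Q) = canon_B eps l e2 e3"
    using A B P Q unfolding QA[symmetric] QB[symmetric] A' B' by (simp_all add: congruence_mult[of _ 4])
  ultimately show ?thesis
    using qsic_congruent_canon[OF A B _ _ det _ _ eps signs, of "P * Q"] P Q signs by auto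
qed

theorem theorem21:
  fixes A B :: "real mat"
  assumes "sym4 A" and "sym4 B"
    and "pencil_poly A B \<noteq> 0"
    and "\<exists>lam0. order lam0 (pencil_poly A B) = 4 \<and> segre_211 A B lam0"
  shows "(index_seq_equiv_211 A B 2 (-1) 2 \<or> index_seq_equiv_211 A B 1 (-1) 3)
    \<and> (index_seq_equiv_211 A B 2 (-1) 2 \<longrightarrow> qsic_real_intersecting_lines_double A B)
    \<and> (index_seq_equiv_211 A B 1 (-1) 3 \<longrightarrow> qsic_conj_lines_double A B)"
proof -
  obtain lam0 where "segre_211 A B lam0"
    using assms(4) by blast
  then obtain e where e: "e \<in> {-1, 1}" and equiv: "pencil_equiv A B (canon_A (-1) 1 e) (canon_B (-1) 0 1 e)"
    using segre_211_pencil_equiv_canon[OF assms(1,2)] by blast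
  have "index_seq_211 (canon_A (-1) 1 e) (canon_B (-1) 0 1 e)
      (1 + of_bool (1 < (0::real)) + of_bool (e < 0)) (-1) (1 + of_bool (1 > (0::real)) + of_bool (e > 0))"
    using e by (intro index_seq_211_canon) auto
  moreover have "(1 + of_bool (1 < (0::real)) + of_bool (e < 0) :: nat) = (if e = 1 then 1 else 2)"
    "(1 + of_bool (1 > (0::real)) + of_bool (e > 0) :: nat) = (if e = 1 then 3 else 2)"
    using e by auto
  ultimately have "index_seq_211 (canon_A (-1) 1 e) (canon_B (-1) 0 1 e)
      (if e = 1 then 1 else 2) (-1) (if e = 1 then 3 else 2)"
    by (simp only:)
  then have "index_seq_equiv_211 A B 2 (-1) 2 \<or> index_seq_equiv_211 A B 1 (-1) 3"
    using equiv unfolding index_seq_equiv_211_def by (cases "e = 1") auto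
  then show ?thesis
    using qsic_if_index_seq_equiv[OF assms(1,2)] by fastforce
qed

end
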